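(* Consider Setting A and suppose $\{\mathcal G[k]\}_{k\ge0}$ satisfies conditions (C1), (C2), (C3). Then there exist observer gains $L_1,\dots,L_N$ and a time $K\in\mathbb N$ such that, when all nodes run Algorithm 1, for every initial state $x[0]$ and all initial estimates, $\hat x_i[k]=x[k]$ for all $k\ge K$ and all $i\in\mathcal V$ (where $\hat x_i[k]=T\hat z_i[k]$).
   Context: Setting A. Consider the discrete-time LTI system $x[k+1]=Ax[k]$, $k\in\mathbb N$, with $A\in\mathbb R^{n\times n}$, monitored by $N$ nodes $\mathcal V=\{1,\dots,N\}$; node $i$ measures $y_i[k]=C_ix[k]$ with $C_i\in\mathbb R^{r_i\times n}$. Let $C=[C_1^T\ \cdots\ C_N^T]^T$ and assume $(A,C)$ is observable. Fix an invertible $T$ such that $\bar A=T^{-1}AT$ is block lower-triangular with diagonal blocks $A_{11},\dots,A_{NN}$ and off-diagonal blocks $A_{jq}$ ($q<j$), zero blocks above the diagonal, and $C_iT=[C_{i1}\ \cdots\ C_{ii}\ 0\ \cdots\ 0]$ for each $i$, with $(A_{jj},C_{jj})$ observable for every $j$ (such $T$ exists). With $z[k]=T^{-1}x[k]$ partitioned compatibly into sub-states $z^{(1)}[k],\dots,z^{(N)}[k]$, one has $z^{(j)}[k+1]=A_{jj}z^{(j)}[k]+\sum_{q=1}^{j-1}A_{jq}z^{(q)}[k]$ and $y_j[k]=\sum_{q=1}^{j}C_{jq}z^{(q)}[k]$. Node $j$ is called the source node of sub-state $j$. Communication: at each time $k$ there is a directed graph $\mathcal G[k]=(\mathcal V,\mathcal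 E[k])$; $(l,i)\in\mathcal E[k]$ means $l$ can send to $i$ at time $k$; $\mathcal N_i[k]=\{l\neq i:(l,i)\in\mathcal E[k]\}$. The union graph over $[k_1,k_2]$ has vertex set $\mathcal V$ and edge set $\bigcup_{\tau=k_1}^{k_2}\mathcal E[\tau]$. Algorithm 1 (run for every sub-state $j$ simultaneously). Each node $i$ keeps an estimate $\hat z^{(j)}_i[k]$ (arbitrary initial value) and a freshness index $\tau^{(j)}_i[k]\in\mathbb N\cup\{\omega\}$, where $\omega$ is a special symbol; initially $\tau^{(j)}_j[0]=0$ and $\tau^{(j)}_i[0]=\omega$ for $i\ne j$. Source node $j$: $\tau^{(j)}_j[k]=0$ for all $k$, and $\hat z^{(j)}_j[k+1]=(A_{jj}-L_jC_{jj})\hat z^{(j)}_j[k]+\sum_{q=1}^{j-1}(A_{jq}-L_jC_{jq})\hat z^{(q)}_j[k]+L_jy_j[k]$, where $L_j$ is an observer gain. Non-source node $i\neq j$ at time $k$: let $\mathcal M^{(j)}_i[k]=\{l\in\mathcal N_i[k]:\tau^{(j)}_l[k]\neq\omega\}$; if $\tau^{(j)}_i[k]=\omega$ let $\mathcal F^{(j)}_i[k]=\mathcal M^{(j)}_i[k]$, otherwise $\mathcal F^{(j)}_i[k]=\{l\in\mathcal M^{(j)}_i[k]:\tau^{(j)}_l[k]<\tau^{(j)}_i[k]\}$. If $\mathcal F^{(j)}_i[k]\ne\emptyset$, pick $u\in\arg\min_{l\in\mathcal F^{(j)}_i[k]}\tau^{(j)}_l[k]$ and set $\tau^{(j)}_i[k+1]=\tau^{(j)}_u[k]+1$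 and $\hat z^{(j)}_i[k+1]=A_{jj}\hat z^{(j)}_u[k]+\sum_{q=1}^{j-1}A_{jq}\hat z^{(q)}_i[k]$ ("$i$ adopts the information of $u$ at time $k$"). If $\mathcal F^{(j)}_i[k]=\emptyset$, set $\tau^{(j)}_i[k+1]=\omega$ if $\tau^{(j)}_i[k]=\omega$ and $\tau^{(j)}_i[k+1]=\tau^{(j)}_i[k]+1$ otherwise, and $\hat z^{(j)}_i[k+1]=A_{jj}\hat z^{(j)}_i[k]+\sum_{q=1}^{j-1}A_{jq}\hat z^{(q)}_i[k]$ ("$i$ adopts its own information"). Conditions on the graph sequence: there is an increasing sequence $\mathbb I=\{t_0,t_1,\dots\}\subset\mathbb N$ with $t_0=0$ such that, with $f(t_q)=t_{q+1}-t_q$: (C1) $f(t_q)$ is non-decreasing in $q$; (C2) with $m(k)=\max\{t_q\in\mathbb I:t_q\le k\}$ and $g(k)=f(m(k))$, one has $\limsup_{k\to\infty}\frac{2(N-1)g(k)}{k}=\delta<1$; (C3) for each $q$, the union graph over $[t_q,t_{q+1}-1]$ is strongly connected. *)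

theory Defs
  imports Complex_Main "Jordan_Normal_Form.Matrix" "HOL-Library.Extended_Real" "HOL-Library.Liminf_Limsup"
begin

(* Conventions: nodes and sub-states are indexed 0..N-1 (paper: 1..N).
   Sub-state j has dimension d j; it occupies coordinates off d j ..< off d j + d j of z. *)

definition off :: "(nat \<Rightarrow> nat) \<Rightarrow> nat \<Rightarrow> nat" where
  "off d j = (\<Sum>q<j. d q)"

definition subm :: "real mat \<Rightarrow> nat \<Rightarrow> nat \<Rightarrow> nat \<Rightarrow> nat \<Rightarrow> real mat" where
  "subm M r0 rs c0 cs = mat rs cs (\<lambda>(a,b). M $$ (r0 + a, c0 + b))"

definition blk :: "(nat \<Rightarrow> nat) \<Rightarrow> real mat \<Rightarrow> nat \<Rightarrow> nat \<Rightarrow> real mat" where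
  "blk d M j q = subm M (off d j) (d j) (off d q) (d q)"

(* column block q of a matrix with n columns (e.g. C_i T), giving C_{iq} *)
definition cblk :: "(nat \<Rightarrow> nat) \<Rightarrow> real mat \<Rightarrow> nat \<Rightarrow> real mat" where
  "cblk d M q = subm M 0 (dim_row M) (off d q) (d q)"

definition vblk :: "(nat \<Rightarrow> nat) \<Rightarrow> real vec \<Rightarrow> nat \<Rightarrow> real vec" where
  "vblk d z j = vec (d j) (\<lambda>a. z $ (off d j + a))"

definition stack :: "(nat \<Rightarrow> nat) \<Rightarrow> nat \<Rightarrow> (nat \<Rightarrow> real vec) \<Rightarrow> real vec" where
  "stack d N zs = vec (off d N)
     (\<lambda>c. let j = (LEAST j. c < off d (Suc j)) in zs j $ (c - off d j))"

primrec vsum :: "nat \<Rightarrow> (nat \<Rightarrow> real vec) \<Rightarrow> nat \<Rightarrow> real vec" where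
  "vsum m f 0 = 0\<^sub>v m"
| "vsum m f (Suc q) = vsum m f q + f q"

definition observable :: "real mat \<Rightarrow> real mat \<Rightarrow> bool" where
  "observable M Cm \<longleftrightarrow>
     (\<forall>v \<in> carrier_vec (dim_col M).
        (\<forall>k < dim_col M. Cm *\<^sub>v ((M ^\<^sub>m k) *\<^sub>v v) = 0\<^sub>v (dim_row Cm)) \<longrightarrow> v = 0\<^sub>v (dim_col M))"

definition observable_stacked :: "nat \<Rightarrow> real mat \<Rightarrow> (nat \<Rightarrow> real mat) \<Rightarrow> bool" where
  "observable_stacked N A C \<longleftrightarrow>
     (\<forall>v \<in> carrier_vec (dim_col A).
        (\<forall>i < N. \<forall>k < dim_col A. C i *\<^sub>v ((A ^\<^sub>m k) *\<^sub>v v) = 0\<^sub>v (dim_row (C i))) \<longrightarrow> v = 0\<^sub>v (dim_col A))"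

(* in-neighbours of node i at time k (E k is the edge set; (l,i) means l can send to i) *)
definition nbrs :: "nat \<Rightarrow> (nat \<Rightarrow> (nat \<times> nat) set) \<Rightarrow> nat \<Rightarrow> nat \<Rightarrow> nat set" where
  "nbrs N E k i = {l. l < N \<and> l \<noteq> i \<and> (l, i) \<in> E k}"

definition union_strongly_connected ::
    "nat \<Rightarrow> (nat \<Rightarrow> (nat \<times> nat) set) \<Rightarrow> nat \<Rightarrow> nat \<Rightarrow> bool" where
  "union_strongly_connected N E k1 k2 \<longleftrightarrow>
     (\<forall>a < N. \<forall>b < N.
        (a, b) \<in> ((\<Union>\<tau> \<in> {k1..k2}. E \<tau>) \<inter> ({..<N} \<times> {..<N}))\<^sup>*)"

(* f(t_q) = t_{q+1} - t_q, indexed by q *)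
definition fgap :: "(nat \<Rightarrow> nat) \<Rightarrow> nat \<Rightarrow> nat" where
  "fgap t q = t (Suc q) - t q"

(* g(k) = f(m(k)), m(k) = max {t_q \<in> I. t_q \<le> k} *)
definition gfun :: "(nat \<Rightarrow> nat) \<Rightarrow> nat \<Rightarrow> nat" where
  "gfun t k = fgap t (GREATEST q. t q \<le> k)"

definition graph_conditions :: "nat \<Rightarrow> (nat \<Rightarrow> (nat \<times> nat) set) \<Rightarrow> (nat \<Rightarrow> nat) \<Rightarrow> bool" where
  "graph_conditions N E t \<longleftrightarrow>
     strict_mono t \<and> t 0 = 0 \<and>
     mono (fgap t) \<and>
     limsup (\<lambda>k. ereal (2 * (real N - 1) * real (gfun t k) / real k)) < 1 \<and>
     (\<forall>q. union_strongly_connected N E (t q) (t (Suc q) - 1))"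

(* A run of Algorithm 1 (all sub-states j simultaneously).
   zh k i j = \<hat>z^{(j)}_i[k], tau k i j = \<tau>^{(j)}_i[k] with None = \<omega>.
   Ab = T^{-1} A T, Cb i = C_i T, L j observer gains, y j k = y_j[k].
   Tie-breaking in the argmin is arbitrary (any admissible u). *)
definition algorithm_run ::
  "nat \<Rightarrow> (nat \<Rightarrow> nat) \<Rightarrow> real mat \<Rightarrow> (nat \<Rightarrow> real mat) \<Rightarrow> (nat \<Rightarrow> real mat) \<Rightarrow>
   (nat \<Rightarrow> (nat \<times> nat) set) \<Rightarrow> (nat \<Rightarrow> nat \<Rightarrow> real vec) \<Rightarrow>
   (nat \<Rightarrow> nat \<Rightarrow> nat \<Rightarrow> real vec) \<Rightarrow> (nat \<Rightarrow> nat \<Rightarrow> nat \<Rightarrow> nat option) \<Rightarrow> bool" where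
  "algorithm_run N d Ab Cb L E y zh tau \<longleftrightarrow>
    (\<forall>i < N. \<forall>j < N. zh 0 i j \<in> carrier_vec (d j)) \<and>
    (\<forall>i < N. \<forall>j < N. tau 0 i j = (if i = j then Some 0 else None)) \<and>
    (\<forall>k. \<forall>j < N.
       tau k j j = Some 0 \<and>
       zh (Suc k) j j =
         (blk d Ab j j - L j * cblk d (Cb j) j) *\<^sub>v zh k j j
         + vsum (d j) (\<lambda>q. (blk d Ab j q - L j * cblk d (Cb j) q) *\<^sub>v zh k j q) j
         + L j *\<^sub>v y j k) \<and>
    (\<forall>k. \<forall>j < N. \<forall>i < N. i \<noteq> j \<longrightarrow>
       (let M = {l \<in> nbrs N E k i. tau k l j \<noteq> None};
            F = (case tau k i j of None \<Rightarrow> M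
                 | Some ti \<Rightarrow> {l \<in> M. the (tau k l j) < ti});
            own = vsum (d j) (\<lambda>q. blk d Ab j q *\<^sub>v zh k i q) j
        in if F \<noteq> {} then
             (\<exists>u \<in> F. (\<forall>l \<in> F. the (tau k u j) \<le> the (tau k l j)) \<and>
                tau (Suc k) i j = Some (the (tau k u j) + 1) \<and>
                zh (Suc k) i j = blk d Ab j j *\<^sub>v zh k u j + own)
           else
             tau (Suc k) i j = map_option Suc (tau k i j) \<and>
             zh (Suc k) i j = blk d Ab j j *\<^sub>v zh k i j + own))"

end

theory Submission
  imports Defs "Jordan_Normal_Form.VS_Connect"
begin

text \<open>
  Each diagonal pair \<open>(A\<^sub>j\<^sub>j, C\<^sub>j\<^sub>j)\<close> is observable, so by duality with controllability there is a
  deadbeat gain \<open>L\<^sub>j\<close> with \<open>(A\<^sub>j\<^sub>j - L\<^sub>j C\<^sub>j\<^sub>j)\<^bsup>d\<^sub>j\<^esup> = 0\<close>.  The estimates then become exact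
  sub-state by sub-state.  Once every node knows the sub-states below \<open>j\<close> exactly, the source
  node \<open>j\<close> runs a Luenberger observer with exact inputs, whose error is multiplied by the
  nilpotent matrix \<open>A\<^sub>j\<^sub>j - L\<^sub>j C\<^sub>j\<^sub>j\<close> at each step and so vanishes \<open>d\<^sub>j\<close> steps later.  An
  estimate of sub-state \<open>j\<close> with freshness index \<open>s\<close> is the source estimate of \<open>s\<close> steps
  earlier pushed forward by the exact dynamics, hence exact once that source estimate was.  In
  every window \<open>[t\<^sub>q, t\<^sub>q\<^sub>+\<^sub>1)\<close> the union graph is strongly connected, so the set of nodes holding
  such fresh information gains a node per window, and after \<open>N\<close> windows all estimates of
  sub-state \<open>j\<close> are exact.  Only (C3) and the monotonicity of \<open>t\<close> are needed for the existence
  of \<open>K\<close>; the growth conditions (C1), (C2) only serve to bound it, and observability of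
  \<open>(A, C)\<close> enters only through that of the diagonal blocks.
\<close>

lemma pow_mat_Suc_left:
  fixes A :: "'a::semiring_1 mat"
  assumes "A \<in> carrier_mat n n"
  shows "A ^\<^sub>m Suc k = A * A ^\<^sub>m k"
proof (induction k)
  case 0 then show ?case using assms by simp
next
  case (Suc k)
  have "A ^\<^sub>m Suc (Suc k) = (A * A ^\<^sub>m k) * A" using Suc by simp
  also have "\<dots> = A * A ^\<^sub>m Suc k" using assms by (simp add: assoc_mult_mat[of _ n n _ n _ n])
  finally show ?case .
qed

lemma transpose_pow_mat:
  fixes A :: "'a::comm_semiring_1 mat"
  assumes "A \<in> carrier_mat n n"
  shows "transpose_mat (A ^\<^sub>m k) = transpose_mat A ^\<^sub>m k"
proof (induction k)
  case 0 then show ?case using assms by simp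
next
  case (Suc k)
  have "transpose_mat (A ^\<^sub>m Suc k) = transpose_mat A * transpose_mat (A ^\<^sub>m k)"
    using assms by (simp add: transpose_mult[of _ n n _ n])
  then show ?case
    using Suc pow_mat_Suc_left[of "transpose_mat A" n k] assms by simp
qed

lemma mult_unit_vec_eq_col:
  fixes A :: "'a::semiring_1 mat"
  assumes "A \<in> carrier_mat nr nc" "j < nc"
  shows "A *\<^sub>v unit_vec nc j = col A j"
  using assms by (intro eq_vecI) (auto simp: scalar_prod_right_unit)

lemma minus_vec_eq_0_imp_eq:
  fixes a b :: "'a::group_add vec"
  assumes "a - b = 0\<^sub>v n" "a \<in> carrier_vec n" "b \<in> carrier_vec n"
  shows "a = b"
proof (rule eq_vecI)
  fix i assume "i < dim_vec b"
  then have "(a - b) $ i = a $ i - b $ i" by (rule index_minus_vec(1))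
  moreover have "(a - b) $ i = 0" using assms \<open>i < dim_vec b\<close> by simp
  ultimately show "a $ i = b $ i" by (metis right_minus_eq)
qed (use assms in simp)

lemma mult_mat_vec_right_inverse:
  fixes T Ti :: "'a::comm_ring_1 mat"
  assumes "T \<in> carrier_mat n n" "Ti \<in> carrier_mat n n" "T * Ti = 1\<^sub>m n" "v \<in> carrier_vec n"
  shows "T *\<^sub>v (Ti *\<^sub>v v) = v"
  using assms by (simp flip: assoc_mult_mat_vec[of T n n Ti n v])

lemma zero_mult_mat_vec:
  fixes v :: "'a::semiring_0 vec"
  shows "v \<in> carrier_vec nc \<Longrightarrow> 0\<^sub>m nr nc *\<^sub>v v = 0\<^sub>v nr"
  by (intro eq_vecI) (auto simp: scalar_prod_def)

lemma mult_mat_vec_zero: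
  fixes A :: "'a::semiring_0 mat"
  shows "A \<in> carrier_mat nr nc \<Longrightarrow> A *\<^sub>v 0\<^sub>v nc = 0\<^sub>v nr"
  by (intro eq_vecI) (auto simp: scalar_prod_def)

lemma scalar_prod_self_eq_0:
  fixes x :: "real vec"
  assumes "x \<bullet> x = 0"
  shows "x = 0\<^sub>v (dim_vec x)"
proof -
  from assms have "(\<Sum>i\<in>{0..<dim_vec x}. x $ i * x $ i) = 0" by (simp add: scalar_prod_def)
  then have "\<forall>i\<in>{0..<dim_vec x}. x $ i * x $ i = 0" by (subst sum_nonneg_eq_0_iff[symmetric]) auto
  then show ?thesis by (intro eq_vecI) auto
qed

lemma scalar_prod_self_nonneg:
  fixes x :: "real vec"
  shows "x \<bullet> x \<ge> 0"
  by (simp add: scalar_prod_def sum_nonneg)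

primrec msum :: "nat \<Rightarrow> nat \<Rightarrow> (nat \<Rightarrow> 'a::monoid_add mat) \<Rightarrow> nat \<Rightarrow> 'a mat" where
  "msum nr nc f 0 = 0\<^sub>m nr nc"
| "msum nr nc f (Suc k) = msum nr nc f k + f k"

lemma msum_carrier:
  "(\<And>i. i < k \<Longrightarrow> f i \<in> carrier_mat nr nc) \<Longrightarrow> msum nr nc f k \<in> carrier_mat nr nc"
  by (induction k) auto

lemma vsum_carrier:
  "(\<And>i. i < k \<Longrightarrow> f i \<in> carrier_vec m) \<Longrightarrow> vsum m f k \<in> carrier_vec m"
  by (induction k) auto

lemma vsum_cong: "(\<And>i. i < k \<Longrightarrow> f i = g i) \<Longrightarrow> vsum m f k = vsum m g k"
  by (induction k) auto

lemma index_vsum: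
  assumes "\<And>i. i < k \<Longrightarrow> f i \<in> carrier_vec m" "a < m"
  shows "vsum m f k $ a = (\<Sum>i<k. f i $ a)"
  using assms
proof (induction k)
  case (Suc k)
  have "a < dim_vec (f k)" using Suc.prems(1)[of k] Suc.prems(2) by simp
  then show ?case using Suc by simp
qed simp

lemma msum_mult_vec:
  assumes "\<And>i. i < k \<Longrightarrow> f i \<in> carrier_mat nr nc" "v \<in> carrier_vec nc"
  shows "msum nr nc f k *\<^sub>v v = vsum nr (\<lambda>i. f i *\<^sub>v v) k"
  using assms
proof (induction k)
  case (Suc k)
  have "msum nr nc f (Suc k) *\<^sub>v v = msum nr nc f k *\<^sub>v v + f k *\<^sub>v v"
    using Suc.prems by (simp add: add_mult_distrib_mat_vec[OF msum_carrier])
  then show ?case using Suc by simp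
qed auto

lemma vsum_minus:
  assumes "\<And>q. q < k \<Longrightarrow> f q \<in> carrier_vec m" "\<And>q. q < k \<Longrightarrow> g q \<in> carrier_vec m"
  shows "vsum m (\<lambda>q. f q - g q) k = vsum m f k - vsum m g k"
proof (rule eq_vecI)
  have carr: "vsum m f k \<in> carrier_vec m" "vsum m g k \<in> carrier_vec m"
    "vsum m (\<lambda>q. f q - g q) k \<in> carrier_vec m"
    using assms by (auto intro!: vsum_carrier)
  then show "dim_vec (vsum m (\<lambda>q. f q - g q) k) = dim_vec (vsum m f k - vsum m g k)" by simp
  fix a assume "a < dim_vec (vsum m f k - vsum m g k)"
  then have a: "a < m" using carr by simp
  have "vsum m (\<lambda>q. f q - g q) k $ a = (\<Sum>q<k. (f q - g q) $ a)"
    using assms a by (simp add: index_vsum)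
  also have "\<dots> = (\<Sum>q<k. f q $ a - g q $ a)"
    using a by (intro sum.cong refl) (metis assms(2) carrier_vecD index_minus_vec(1) lessThan_iff)
  also have "\<dots> = vsum m f k $ a - vsum m g k $ a"
    using assms a by (simp add: index_vsum sum_subtractf)
  finally show "vsum m (\<lambda>q. f q - g q) k $ a = (vsum m f k - vsum m g k) $ a"
    using a carr by simp
qed

lemma mult_mat_vsum:
  fixes L :: "real mat"
  assumes L: "L \<in> carrier_mat m r" and w: "\<And>q. q < k \<Longrightarrow> w q \<in> carrier_vec r"
  shows "L *\<^sub>v vsum r w k = vsum m (\<lambda>q. L *\<^sub>v w q) k"
  using w
proof (induction k)
  case 0 then show ?case using L by auto
next
  case (Suc k)
  have "vsum r w k \<in> carrier_vec r" using Suc.prems by (intro vsum_carrier) auto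
  then show ?case using L Suc by (simp add: mult_add_distrib_mat_vec)
qed

lemma vsum_zero_tail:
  assumes "\<And>q. q < N \<Longrightarrow> f q \<in> carrier_vec m"
    and "\<And>q. j < q \<Longrightarrow> q < N \<Longrightarrow> f q = 0\<^sub>v m" and "j < N"
  shows "vsum m f N = vsum m f j + f j"
proof -
  have "vsum m f N' = vsum m f (Suc j)" if "Suc j \<le> N'" "N' \<le> N" for N'
    using that
  proof (induction N' rule: dec_induct)
    case (step N')
    then show ?case using assms(1,2)[of N'] vsum_carrier[of N' f m] assms(1) by simp
  qed simp
  from this[of N] assms(3) show ?thesis by simp
qed

section \<open>Deadbeat observer gains\<close>

definition observability_gramian :: "real mat \<Rightarrow> real mat \<Rightarrow> real mat" where
  "observability_gramian M Cm = msum (dim_col M) (dim_col M)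
     (\<lambda>i. transpose_mat (Cm * M ^\<^sub>m i) * (Cm * M ^\<^sub>m i)) (dim_col M)"

context
  fixes M Cm :: "real mat" and m p :: nat
  assumes M: "M \<in> carrier_mat m m" and Cm: "Cm \<in> carrier_mat p m"
begin

lemma observability_gramian_carrier: "observability_gramian M Cm \<in> carrier_mat m m"
proof -
  have "transpose_mat (Cm * M ^\<^sub>m i) * (Cm * M ^\<^sub>m i) \<in> carrier_mat m m" for i
    using M Cm by (meson mult_carrier_mat pow_carrier_mat transpose_carrier_mat)
  moreover have "dim_col M = m" using M by simp
  ultimately show ?thesis unfolding observability_gramian_def by (simp add: msum_carrier)
qed

lemma observability_gramian_mult_vec:
  assumes v: "v \<in> carrier_vec m"
  shows "observability_gramian M Cm *\<^sub>v v
    = vsum m (\<lambda>i. transpose_mat (Cm * M ^\<^sub>m i) *\<^sub>v ((Cm * M ^\<^sub>m i) *\<^sub>v v)) m"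
proof -
  have R: "Cm * M ^\<^sub>m i \<in> carrier_mat p m" for i using M Cm by simp
  have "observability_gramian M Cm *\<^sub>v v
      = vsum m (\<lambda>i. (transpose_mat (Cm * M ^\<^sub>m i) * (Cm * M ^\<^sub>m i)) *\<^sub>v v) m"
    unfolding observability_gramian_def using M R v
    by (simp add: msum_mult_vec[of m _ m m] mult_carrier_mat[of _ m p _ m])
  also have "\<dots> = vsum m (\<lambda>i. transpose_mat (Cm * M ^\<^sub>m i) *\<^sub>v ((Cm * M ^\<^sub>m i) *\<^sub>v v)) m"
    using R v by (intro vsum_cong assoc_mult_mat_vec) auto
  finally show ?thesis .
qed

lemma scalar_prod_observability_gramian:
  assumes v: "v \<in> carrier_vec m"
  shows "v \<bullet> (observability_gramian M Cm *\<^sub>v v)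
    = (\<Sum>i<m. ((Cm * M ^\<^sub>m i) *\<^sub>v v) \<bullet> ((Cm * M ^\<^sub>m i) *\<^sub>v v))"
proof -
  define R where "R i = Cm * M ^\<^sub>m i" for i
  have R: "R i \<in> carrier_mat p m" for i using M Cm by (simp add: R_def)
  have "v \<bullet> vsum m (\<lambda>i. transpose_mat (R i) *\<^sub>v (R i *\<^sub>v v)) k = (\<Sum>i<k. (R i *\<^sub>v v) \<bullet> (R i *\<^sub>v v))" for k
  proof (induction k)
    case (Suc k)
    have "vsum m (\<lambda>i. transpose_mat (R i) *\<^sub>v (R i *\<^sub>v v)) k \<in> carrier_vec m"
      using R v by (intro vsum_carrier) (metis mult_mat_vec_carrier transpose_carrier_mat)
    moreover have "v \<bullet> (transpose_mat (R k) *\<^sub>v (R k *\<^sub>v v)) = (R k *\<^sub>v v) \<bullet> (R k *\<^sub>v v)"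
      using R[of k] v by (subst comm_scalar_prod[of _ m]) (auto simp: transpose_vec_mult_scalar[of _ p m])
    ultimately show ?case using Suc v R[of k] by (simp add: scalar_prod_add_distrib[of _ m])
  qed (use v in simp)
  then show ?thesis using observability_gramian_mult_vec[OF v] by (simp add: R_def)
qed

lemma observable_imp_det_observability_gramian:
  assumes obs: "observable M Cm"
  shows "det (observability_gramian M Cm) \<noteq> 0"
proof -
  have "v = 0\<^sub>v m" if v: "v \<in> carrier_vec m" and W0: "observability_gramian M Cm *\<^sub>v v = 0\<^sub>v m" for v
  proof -
    have "(\<Sum>i<m. ((Cm * M ^\<^sub>m i) *\<^sub>v v) \<bullet> ((Cm * M ^\<^sub>m i) *\<^sub>v v)) = 0"
      using scalar_prod_observability_gramian[OF v] W0 v by simp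
    then have "\<forall>i\<in>{..<m}. ((Cm * M ^\<^sub>m i) *\<^sub>v v) \<bullet> ((Cm * M ^\<^sub>m i) *\<^sub>v v) = 0"
      by (subst sum_nonneg_eq_0_iff[symmetric]) (auto simp: scalar_prod_self_nonneg)
    then have "\<forall>k<m. Cm *\<^sub>v ((M ^\<^sub>m k) *\<^sub>v v) = 0\<^sub>v p"
      using M Cm v scalar_prod_self_eq_0[of "Cm *\<^sub>v ((M ^\<^sub>m _) *\<^sub>v v)"]
      by (auto simp: assoc_mult_mat_vec[of _ p m _ m])
    then show ?thesis using obs v M Cm unfolding observable_def by auto
  qed
  then show ?thesis
    using det_0_iff_vec_prod_zero_field[OF observability_gramian_carrier] by blast
qed

lemma observable_imp_dual_reachable:
  assumes obs: "observable M Cm" and z: "z \<in> carrier_vec m"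
  shows "\<exists>u. (\<forall>i. u i \<in> carrier_vec p) \<and>
     z = vsum m (\<lambda>i. (transpose_mat M ^\<^sub>m i) *\<^sub>v (transpose_mat Cm *\<^sub>v u i)) m"
proof -
  define W where "W = observability_gramian M Cm"
  have W: "W \<in> carrier_mat m m" unfolding W_def by (rule observability_gramian_carrier)
  from det_non_zero_imp_unit[OF W] observable_imp_det_observability_gramian[OF obs]
  obtain Wi where Wi: "Wi \<in> carrier_mat m m" "W * Wi = 1\<^sub>m m"
    unfolding Units_def W_def by (auto simp: ring_mat_def)
  define u where "u i = (Cm * M ^\<^sub>m i) *\<^sub>v (Wi *\<^sub>v z)" for i
  have u: "u i \<in> carrier_vec p" for i unfolding u_def using Cm by (intro carrier_vecI) simp
  have "z = W *\<^sub>v (Wi *\<^sub>v z)" by (rule mult_mat_vec_right_inverse[OF W Wi(1,2) z, symmetric])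
  also have "\<dots> = vsum m (\<lambda>i. transpose_mat (Cm * M ^\<^sub>m i) *\<^sub>v u i) m"
    unfolding W_def u_def using Wi z by (simp add: observability_gramian_mult_vec)
  also have "\<dots> = vsum m (\<lambda>i. (transpose_mat M ^\<^sub>m i) *\<^sub>v (transpose_mat Cm *\<^sub>v u i)) m"
  proof (rule vsum_cong)
    fix i
    have "transpose_mat (Cm * M ^\<^sub>m i) = transpose_mat M ^\<^sub>m i * transpose_mat Cm"
      using M Cm by (simp add: transpose_mult[of _ p m _ m] transpose_pow_mat)
    then show "transpose_mat (Cm * M ^\<^sub>m i) *\<^sub>v u i = (transpose_mat M ^\<^sub>m i) *\<^sub>v (transpose_mat Cm *\<^sub>v u i)"
      using M Cm u[of i] by (simp add: assoc_mult_mat_vec[of _ m m _ p])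
  qed
  finally show ?thesis using u by blast
qed

end

context vec_space
begin

lemma steering_chain_in_subset:
  fixes R :: "'a vec \<Rightarrow> 'a vec set \<Rightarrow> bool" and Q :: "nat \<Rightarrow> 'a vec set"
  assumes Q0: "Q 0 \<subseteq> {0\<^sub>v n}" and Qn: "carrier_vec n \<subseteq> Q n"
    and Qs: "\<And>k x. x \<in> Q (Suc k) \<Longrightarrow> R x (Q k)"
    and Rmono: "\<And>x S S'. R x S \<Longrightarrow> S \<subseteq> S' \<Longrightarrow> R x S'"
    and Qc: "\<And>k. Q k \<subseteq> carrier_vec n"
    and zero: "0\<^sub>v n \<in> S" and closed: "\<And>x. x \<in> carrier_vec n \<Longrightarrow> R x S \<Longrightarrow> x \<in> S"
  shows "carrier_vec n \<subseteq> S"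
proof -
  have "Q k \<subseteq> S" for k
  proof (induction k)
    case 0
    then show ?case using Q0 zero by auto
  next
    case (Suc k)
    show ?case
    proof
      fix x assume "x \<in> Q (Suc k)"
      then show "x \<in> S" using Qs Rmono[OF _ Suc] closed Qc by blast
    qed
  qed
  then show ?thesis using Qn by blast
qed

lemma greedy_lin_indpt_chain:
  fixes R :: "'a vec \<Rightarrow> 'a vec set \<Rightarrow> bool" and Q :: "nat \<Rightarrow> 'a vec set"
  assumes Q0: "Q 0 \<subseteq> {0\<^sub>v n}" and Qc: "\<And>k. Q k \<subseteq> carrier_vec n" and Qn: "carrier_vec n \<subseteq> Q n"
    and Qs: "\<And>k x. x \<in> Q (Suc k) \<Longrightarrow> R x (Q k)"
    and Rmono: "\<And>x S S'. R x S \<Longrightarrow> S \<subseteq> S' \<Longrightarrow> R x S'"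
    and k: "k \<le> n"
  shows "\<exists>bs. length bs = k \<and> distinct bs \<and> set bs \<subseteq> carrier_vec n \<and> lin_indpt (set bs) \<and>
             (\<forall>i<k. R (bs ! i) (span (set (take i bs))))"
  using k
proof (induction k)
  case 0
  then show ?case by (intro exI[of _ "[]"]) (auto simp: lin_dep_def)
next
  case (Suc k)
  then obtain bs where bs: "length bs = k" "distinct bs" "set bs \<subseteq> carrier_vec n"
     "lin_indpt (set bs)" "\<forall>i<k. R (bs ! i) (span (set (take i bs)))" by auto
  show ?case
  proof (cases "\<exists>x \<in> carrier_vec n. x \<notin> span (set bs) \<and> R x (span (set bs))")
    case True
    then obtain x where x: "x \<in> carrier_vec n" "x \<notin> span (set bs)" "R x (span (set bs))" by auto
    have "x \<notin> set bs" using x(2) in_own_span[OF bs(3)] by auto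
    moreover have "lin_indpt (set bs \<union> {x})"
      using lin_dep_iff_in_span[OF _ bs(4) _ \<open>x \<notin> set bs\<close>] bs(3) x by auto
    moreover have "R ((bs @ [x]) ! i) (span (set (take i (bs @ [x]))))" if "i < Suc k" for i
      using that bs(1,5) x(3) by (cases "i < k") (auto simp: nth_append)
    ultimately show ?thesis using bs(1-3) x(1) by (intro exI[of _ "bs @ [x]"]) simp
  next
    case False
    then have "carrier_vec n \<subseteq> span (set bs)"
      by (intro steering_chain_in_subset[of Q R "span (set bs)", OF Q0 Qn Qs Rmono Qc span_zero]) auto
    then have "span (set bs) = carrier_vec n" using span_is_subset2[OF bs(3)] by auto
    then have "dim \<le> card (set bs)" by (intro gen_ge_dim) (use bs in auto)
    then show ?thesis using Suc.prems dim_is_n distinct_card[OF bs(2)] bs(1) by simp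
  qed
qed

lemma mult_mat_span:
  assumes G: "G \<in> carrier_mat n n" and xs: "set xs \<subseteq> carrier_vec n" and S: "S \<subseteq> carrier_vec n"
    and img: "\<forall>x\<in>set xs. G *\<^sub>v x \<in> span S" and y: "y \<in> span (set xs)"
  shows "G *\<^sub>v y \<in> span S"
proof -
  have "G *\<^sub>v lincomb_list c xs \<in> span S" for c
    using xs img
  proof (induction xs arbitrary: c)
    case Nil
    have "G *\<^sub>v 0\<^sub>v n = 0\<^sub>v n" using G by auto
    then show ?case using span_zero by simp
  next
    case (Cons x xs)
    have "lincomb_list (c \<circ> Suc) xs \<in> carrier_vec n"
      using Cons.prems by (intro lincomb_list_carrier) auto
    then have "G *\<^sub>v lincomb_list c (x # xs) = c 0 \<cdot>\<^sub>v (G *\<^sub>v x) + G *\<^sub>v lincomb_list (c \<circ> Suc) xs"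
      using Cons.prems G by (simp add: lincomb_list_Cons mult_add_distrib_mat_vec mult_mat_vec)
    also have "\<dots> \<in> span S"
      using Cons S by (intro span_add1 smult_in_span) auto
    finally show ?case .
  qed
  moreover obtain c where "y = lincomb_list c xs"
    using y span_list_as_span[OF xs] unfolding span_list_def by auto
  ultimately show ?thesis by auto
qed

lemma nilpotent_if_lowers_flag:
  assumes G: "G \<in> carrier_mat n n" and bs: "length bs = n" "set bs \<subseteq> carrier_vec n"
    "span (set bs) = carrier_vec n"
    and lowers: "\<And>i. i < n \<Longrightarrow> G *\<^sub>v (bs ! i) \<in> span (set (take i bs))"
  shows "G ^\<^sub>m n = 0\<^sub>m n n"
proof -
  have take_carrier: "set (take i bs) \<subseteq> carrier_vec n" for i
    using bs(2) by (meson set_take_subset subset_trans)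
  have flag: "(G ^\<^sub>m r) *\<^sub>v y \<in> span (set (take (i - r) bs))"
    if "i \<le> n" "y \<in> span (set (take i bs))" for r i y
    using that
  proof (induction r arbitrary: i y)
    case 0
    then have "y \<in> carrier_vec n" using span_is_subset2[OF take_carrier] by auto
    then show ?case using 0 G by simp
  next
    case (Suc r)
    have "y \<in> carrier_vec n" using Suc.prems span_is_subset2[OF take_carrier] by auto
    then have pow: "(G ^\<^sub>m Suc r) *\<^sub>v y = (G ^\<^sub>m r) *\<^sub>v (G *\<^sub>v y)"
      using G by (simp add: assoc_mult_mat_vec[of _ n n _ n])
    have "G *\<^sub>v y \<in> span (set (take (i - 1) bs))"
    proof (rule mult_mat_span[OF G take_carrier take_carrier _ Suc.prems(2)], rule ballI)
      fix x assume "x \<in> set (take i bs)"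
      then obtain j where j: "j < i" "x = bs ! j"
        using Suc.prems(1) bs(1)
        by (metis in_set_conv_nth length_take min.absorb4 nth_take le_neq_implies_less min_def)
      have "span (set (take j bs)) \<subseteq> span (set (take (i - 1) bs))"
        using j by (intro span_is_monotone set_take_subset_set_take) auto
      then show "G *\<^sub>v x \<in> span (set (take (i - 1) bs))"
        using lowers[of j] j Suc.prems(1) by auto
    qed
    moreover have "i - 1 \<le> n" using Suc.prems(1) by simp
    ultimately have "(G ^\<^sub>m r) *\<^sub>v (G *\<^sub>v y) \<in> span (set (take (i - 1 - r) bs))"
      using Suc.IH by blast
    then show ?case using pow by (metis diff_Suc_eq_diff_pred)
  qed
  have "(G ^\<^sub>m n) *\<^sub>v y \<in> span (set (take (n - n) bs))" if "y \<in> carrier_vec n" for y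
    by (rule flag) (use that bs in auto)
  then have "(G ^\<^sub>m n) *\<^sub>v y = 0\<^sub>v n" if "y \<in> carrier_vec n" for y
    using that span_empty by simp
  then have "col (G ^\<^sub>m n) j = col (0\<^sub>m n n) j" if "j < n" for j
    using that G mult_unit_vec_eq_col[of "G ^\<^sub>m n" n n j] by simp
  then show ?thesis using G by (intro mat_col_eqI) auto
qed

lemma exists_mat_mapping_basis:
  assumes bs: "length bs = n" "set bs \<subseteq> carrier_vec n" "span (set bs) = carrier_vec n"
    and ws: "\<And>i. i < n \<Longrightarrow> ws i \<in> carrier_vec p"
  shows "\<exists>F \<in> carrier_mat p n. \<forall>i < n. F *\<^sub>v (bs ! i) = ws i"
proof -
  define P where "P = mat_of_cols n bs"
  have P: "P \<in> carrier_mat n n" using bs mat_of_cols_carrier(1)[of n bs] by (simp add: P_def)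
  have "\<exists>a. unit_vec n c = P *\<^sub>v vec n a" if "c < n" for c
  proof -
    have "unit_vec n c \<in> span_list bs" using bs span_list_as_span[OF bs(2)] by auto
    then obtain a where "unit_vec n c = lincomb_list a bs" unfolding span_list_def by auto
    moreover have "\<forall>w\<in>set bs. dim_vec w = n" using bs(2) by auto
    ultimately show ?thesis using bs(1) lincomb_list_as_mat_mult[of bs a] by (auto simp: P_def)
  qed
  then obtain \<alpha> where \<alpha>: "\<And>c. c < n \<Longrightarrow> unit_vec n c = P *\<^sub>v vec n (\<alpha> c)" by metis
  define Y where "Y = mat n n (\<lambda>(i, c). \<alpha> c i)"
  have Y: "Y \<in> carrier_mat n n" by (simp add: Y_def)
  have "P * Y = 1\<^sub>m n"
  proof (rule mat_col_eqI)
    fix c assume "c < dim_col (1\<^sub>m n)"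
    then have c: "c < n" by simp
    have "col (P * Y) c = P *\<^sub>v col Y c" using col_mult2[OF P Y c] .
    also have "col Y c = vec n (\<alpha> c)" using c by (simp add: Y_def col_mat)
    finally show "col (P * Y) c = col (1\<^sub>m n) c" using \<alpha>[OF c] c by simp
  qed (use P Y in auto)
  then have YP: "Y * P = 1\<^sub>m n" using mat_mult_left_right_inverse[OF P Y] by blast
  have Yb: "Y *\<^sub>v (bs ! i) = unit_vec n i" if i: "i < n" for i
  proof -
    have "bs ! i = col P i" using i bs unfolding P_def by (metis col_mat_of_cols nth_mem subsetD)
    then show ?thesis using col_mult2[OF Y P i] YP i by simp
  qed
  define U where "U = mat_of_cols p (map ws [0..<n])"
  have U: "U \<in> carrier_mat p n" using mat_of_cols_carrier(1)[of p "map ws [0..<n]"] by (simp add: U_def)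
  have "U *\<^sub>v unit_vec n i = ws i" if "i < n" for i
    using that ws[OF that] U by (simp add: mult_unit_vec_eq_col U_def col_mat_of_cols)
  then have "(U * Y) *\<^sub>v (bs ! i) = ws i" if "i < n" for i
    using that U Y Yb bs by (simp add: assoc_mult_mat_vec[of _ p n _ n] nth_mem subsetD)
  then show ?thesis using U Y by (intro bexI[of _ "U * Y"]) auto
qed

end

lemma steer_to_origin_step:
  fixes A B :: "real mat"
  assumes A: "A \<in> carrier_mat m m" and B: "B \<in> carrier_mat m p"
    and x: "x \<in> carrier_vec m" and u: "\<And>i. u i \<in> carrier_vec p"
    and reach: "(A ^\<^sub>m Suc k) *\<^sub>v x = vsum m (\<lambda>i. (A ^\<^sub>m i) *\<^sub>v (B *\<^sub>v u i)) (Suc k)"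
  shows "(A ^\<^sub>m k) *\<^sub>v (A *\<^sub>v x - B *\<^sub>v u k) = vsum m (\<lambda>i. (A ^\<^sub>m i) *\<^sub>v (B *\<^sub>v u i)) k"
proof -
  define X where "X = vsum m (\<lambda>i. (A ^\<^sub>m i) *\<^sub>v (B *\<^sub>v u i)) k"
  define c where "c = (A ^\<^sub>m k) *\<^sub>v (B *\<^sub>v u k)"
  have X: "X \<in> carrier_vec m" unfolding X_def
    using A B u by (intro vsum_carrier) (metis pow_carrier_mat mult_mat_vec_carrier)
  have c: "c \<in> carrier_vec m" unfolding c_def
    using A B u by (metis pow_carrier_mat mult_mat_vec_carrier)
  have "(A ^\<^sub>m k) *\<^sub>v (A *\<^sub>v x - B *\<^sub>v u k) = (A ^\<^sub>m k) *\<^sub>v (A *\<^sub>v x) - c"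
    unfolding c_def using A B x u by (simp add: mult_minus_distrib_mat_vec[of _ m m])
  also have "(A ^\<^sub>m k) *\<^sub>v (A *\<^sub>v x) = X + c"
    using reach A x by (simp add: X_def c_def assoc_mult_mat_vec[of _ m m _ m])
  also have "X + c - c = X" using X c by auto
  finally show ?thesis unfolding X_def .
qed

text \<open>
  A basis \<open>b\<^sub>0, \<dots>, b\<^sub>m\<^sub>-\<^sub>1\<close> is chosen greedily so that each \<open>b\<^sub>i\<close> can be steered into the span of
  its predecessors in one step, \<open>A b\<^sub>i - B w\<^sub>i \<in> span {b\<^sub>0, \<dots>, b\<^sub>i\<^sub>-\<^sub>1}\<close>.  The feedback \<open>F\<close> with
  \<open>F b\<^sub>i = w\<^sub>i\<close> then makes \<open>A - B F\<close> strictly lower this flag, hence nilpotent.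
\<close>

lemma reachable_imp_deadbeat_feedback:
  fixes A B :: "real mat"
  assumes A: "A \<in> carrier_mat m m" and B: "B \<in> carrier_mat m p"
    and reach: "\<And>x. x \<in> carrier_vec m \<Longrightarrow> \<exists>u. (\<forall>i. u i \<in> carrier_vec p) \<and>
       x = vsum m (\<lambda>i. (A ^\<^sub>m i) *\<^sub>v (B *\<^sub>v u i)) m"
  shows "\<exists>F \<in> carrier_mat p m. (A - B * F) ^\<^sub>m m = 0\<^sub>m m m"
proof -
  interpret VS: vec_space "TYPE(real)" m .
  \<comment> \<open>\<open>Q k\<close>: the states that can be steered to the origin in \<open>k\<close> steps\<close>
  define Q where "Q k = {x \<in> carrier_vec m. \<exists>u. (\<forall>i. u i \<in> carrier_vec p) \<and>
       (A ^\<^sub>m k) *\<^sub>v x = vsum m (\<lambda>i. (A ^\<^sub>m i) *\<^sub>v (B *\<^sub>v u i)) k}" for k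
  define steerable_into where
    "steerable_into x S \<longleftrightarrow> (\<exists>w \<in> carrier_vec p. A *\<^sub>v x - B *\<^sub>v w \<in> S)" for x S
  have "Q 0 \<subseteq> {0\<^sub>v m}" using A by (auto simp: Q_def)
  moreover have "Q k \<subseteq> carrier_vec m" for k by (auto simp: Q_def)
  moreover have "carrier_vec m \<subseteq> Q m"
  proof
    fix x :: "real vec" assume x: "x \<in> carrier_vec m"
    then have "(A ^\<^sub>m m) *\<^sub>v x \<in> carrier_vec m" using A by (metis pow_carrier_mat mult_mat_vec_carrier)
    from reach[OF this] show "x \<in> Q m" using x by (auto simp: Q_def)
  qed
  moreover have "steerable_into x (Q k)" if "x \<in> Q (Suc k)" for k x
  proof -
    from that obtain u where u: "\<forall>i. u i \<in> carrier_vec p" "x \<in> carrier_vec m"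
      "(A ^\<^sub>m Suc k) *\<^sub>v x = vsum m (\<lambda>i. (A ^\<^sub>m i) *\<^sub>v (B *\<^sub>v u i)) (Suc k)"
      by (auto simp: Q_def)
    then have "A *\<^sub>v x - B *\<^sub>v u k \<in> Q k"
      using A B steer_to_origin_step[OF A B u(2)] by (auto simp: Q_def)
    then show ?thesis using u(1) by (auto simp: steerable_into_def)
  qed
  ultimately obtain bs where bs: "length bs = m" "set bs \<subseteq> carrier_vec m" "VS.lin_indpt (set bs)"
      "distinct bs" "\<forall>i<m. steerable_into (bs ! i) (VS.span (set (take i bs)))"
    using VS.greedy_lin_indpt_chain[of Q steerable_into m] by (auto simp: steerable_into_def)
  have "VS.basis (set bs)"
    by (rule VS.dim_li_is_basis) (use bs in \<open>auto simp: VS.dim_is_n distinct_card\<close>)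
  then have span_bs: "VS.span (set bs) = carrier_vec m" by (simp add: VS.basis_def)
  obtain ws where ws: "\<And>i. i < m \<Longrightarrow> ws i \<in> carrier_vec p \<and>
      A *\<^sub>v bs ! i - B *\<^sub>v ws i \<in> VS.span (set (take i bs))"
    using bs(5) unfolding steerable_into_def by metis
  then obtain F where F: "F \<in> carrier_mat p m" "\<And>i. i < m \<Longrightarrow> F *\<^sub>v (bs ! i) = ws i"
    using VS.exists_mat_mapping_basis[OF bs(1,2) span_bs] by metis
  have "(A - B * F) *\<^sub>v (bs ! i) \<in> VS.span (set (take i bs))" if "i < m" for i
    using that ws[OF that] F A B bs
    by (simp add: minus_mult_distrib_mat_vec[of _ m m] assoc_mult_mat_vec[of _ m p _ m] nth_mem subsetD)
  then have "(A - B * F) ^\<^sub>m m = 0\<^sub>m m m"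
    using A B F by (intro VS.nilpotent_if_lowers_flag[OF _ bs(1,2) span_bs]) auto
  then show ?thesis using F by blast
qed

lemma observable_imp_deadbeat_gain:
  fixes M Cm :: "real mat"
  assumes M: "M \<in> carrier_mat m m" and Cm: "Cm \<in> carrier_mat p m" and obs: "observable M Cm"
  shows "\<exists>L \<in> carrier_mat m p. (M - L * Cm) ^\<^sub>m m = 0\<^sub>m m m"
proof -
  obtain F where F: "F \<in> carrier_mat p m"
    and nil: "(transpose_mat M - transpose_mat Cm * F) ^\<^sub>m m = 0\<^sub>m m m"
    using reachable_imp_deadbeat_feedback[of "transpose_mat M" m "transpose_mat Cm" p]
      observable_imp_dual_reachable[OF M Cm obs] M Cm by auto
  define G where "G = transpose_mat M - transpose_mat Cm * F"
  have G: "G \<in> carrier_mat m m"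
    using M Cm F by (simp add: G_def) (metis minus_carrier_mat mult_carrier_mat transpose_carrier_mat)
  have "M - transpose_mat F * Cm = transpose_mat G"
    using M Cm F by (simp add: G_def transpose_minus transpose_mult[of _ m p _ m])
  then have "(M - transpose_mat F * Cm) ^\<^sub>m m = transpose_mat (G ^\<^sub>m m)"
    by (simp add: transpose_pow_mat[OF G])
  also have "\<dots> = 0\<^sub>m m m" using nil by (simp add: G_def)
  finally have "(M - transpose_mat F * Cm) ^\<^sub>m m = 0\<^sub>m m m" .
  then show ?thesis using F by (intro bexI[of _ "transpose_mat F"]) auto
qed

section \<open>Block decomposition\<close>

lemma off_Suc: "off d (Suc j) = off d j + d j"
  by (simp add: off_def)

lemma off_mono: "j \<le> q \<Longrightarrow> off d j \<le> off d q"
  unfolding off_def by (rule sum_mono2) auto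

lemma sum_lessThan_add_split: "(\<Sum>c<a + (b::nat). g c) = (\<Sum>c<a. g c) + (\<Sum>c<b. g (a + c))"
  by (induction b) (auto simp: add.assoc)

lemma sum_lessThan_off: "(\<Sum>c<off d N. g c) = (\<Sum>q<N. \<Sum>b<d q. g (off d q + b))"
  by (induction N) (simp_all add: off_Suc sum_lessThan_add_split, simp add: off_def)

lemma blk_carrier [simp]: "blk d M j q \<in> carrier_mat (d j) (d q)"
  by (simp add: blk_def subm_def)

lemma cblk_carrier [simp]: "cblk d M q \<in> carrier_mat (dim_row M) (d q)"
  by (simp add: cblk_def subm_def)

lemma vblk_carrier [simp]: "vblk d z j \<in> carrier_vec (d j)"
  by (simp add: vblk_def)

lemma mult_vec_eq_vsum_cblk:
  fixes M :: "real mat"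
  assumes M: "M \<in> carrier_mat r (off d N)" and z: "z \<in> carrier_vec (off d N)"
  shows "M *\<^sub>v z = vsum r (\<lambda>q. cblk d M q *\<^sub>v vblk d z q) N"
proof (rule eq_vecI)
  have summands: "cblk d M q *\<^sub>v vblk d z q \<in> carrier_vec r" for q
    using M by (metis cblk_carrier vblk_carrier mult_mat_vec_carrier carrier_matD(1))
  have sum_carrier: "vsum r (\<lambda>q. cblk d M q *\<^sub>v vblk d z q) N \<in> carrier_vec r"
    by (rule vsum_carrier) (rule summands)
  then show "dim_vec (M *\<^sub>v z) = dim_vec (vsum r (\<lambda>q. cblk d M q *\<^sub>v vblk d z q) N)"
    using M by simp
  fix a assume "a < dim_vec (vsum r (\<lambda>q. cblk d M q *\<^sub>v vblk d z q) N)"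
  then have a: "a < r" using sum_carrier by simp
  have "(M *\<^sub>v z) $ a = (\<Sum>c<off d N. M $$ (a, c) * z $ c)"
    using M z a by (simp add: scalar_prod_def atLeast0LessThan)
  also have "\<dots> = (\<Sum>q<N. \<Sum>b<d q. M $$ (a, off d q + b) * z $ (off d q + b))"
    by (rule sum_lessThan_off)
  also have "\<dots> = vsum r (\<lambda>q. cblk d M q *\<^sub>v vblk d z q) N $ a"
    using a M by (subst index_vsum[OF summands a])
      (simp add: cblk_def subm_def vblk_def scalar_prod_def atLeast0LessThan)
  finally show "(M *\<^sub>v z) $ a = vsum r (\<lambda>q. cblk d M q *\<^sub>v vblk d z q) N $ a" .
qed

lemma vblk_mult_vec_eq_vsum_blk:
  fixes M :: "real mat"
  assumes M: "M \<in> carrier_mat n n" and z: "z \<in> carrier_vec n" and n: "off d N = n" and j: "j < N"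
  shows "vblk d (M *\<^sub>v z) j = vsum (d j) (\<lambda>q. blk d M j q *\<^sub>v vblk d z q) N"
proof -
  define Mj where "Mj = subm M (off d j) (d j) 0 n"
  have rows: "off d j + a < n" if "a < d j" for a
    using that j off_mono[of "Suc j" N d] n by (simp add: off_Suc)
  have "row Mj a = row M (off d j + a)" if "a < d j" for a
    using that rows[OF that] M by (intro eq_vecI) (auto simp: Mj_def subm_def)
  then have "vblk d (M *\<^sub>v z) j = Mj *\<^sub>v z"
    using M rows by (intro eq_vecI) (auto simp: vblk_def Mj_def subm_def)
  also have "\<dots> = vsum (d j) (\<lambda>q. cblk d Mj q *\<^sub>v vblk d z q) N"
    using z n by (intro mult_vec_eq_vsum_cblk) (auto simp: Mj_def subm_def)
  also have "cblk d Mj q = blk d M j q" if "q < N" for q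
    using that n off_mono[of "Suc q" N d]
    by (intro eq_matI) (auto simp: cblk_def blk_def subm_def Mj_def off_Suc)
  then have "vsum (d j) (\<lambda>q. cblk d Mj q *\<^sub>v vblk d z q) N
      = vsum (d j) (\<lambda>q. blk d M j q *\<^sub>v vblk d z q) N"
    by (intro vsum_cong) simp
  finally show ?thesis .
qed

lemma vblk_mult_vec_lower_triangular:
  fixes M :: "real mat"
  assumes M: "M \<in> carrier_mat n n" and z: "z \<in> carrier_vec n" and n: "off d N = n" and j: "j < N"
    and tri: "\<And>q. j < q \<Longrightarrow> q < N \<Longrightarrow> blk d M j q = 0\<^sub>m (d j) (d q)"
  shows "vblk d (M *\<^sub>v z) j = blk d M j j *\<^sub>v vblk d z j + vsum (d j) (\<lambda>q. blk d M j q *\<^sub>v vblk d z q) j"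
proof -
  have summands: "blk d M j q *\<^sub>v vblk d z q \<in> carrier_vec (d j)" for q
    by (metis blk_carrier vblk_carrier mult_mat_vec_carrier)
  have "vsum (d j) (\<lambda>q. blk d M j q *\<^sub>v vblk d z q) N
      = vsum (d j) (\<lambda>q. blk d M j q *\<^sub>v vblk d z q) j + blk d M j j *\<^sub>v vblk d z j"
    by (rule vsum_zero_tail) (use summands tri j in auto)
  then have "vblk d (M *\<^sub>v z) j = vsum (d j) (\<lambda>q. blk d M j q *\<^sub>v vblk d z q) j + blk d M j j *\<^sub>v vblk d z j"
    using vblk_mult_vec_eq_vsum_blk[OF M z n j] by simp
  moreover have "vsum (d j) (\<lambda>q. blk d M j q *\<^sub>v vblk d z q) j \<in> carrier_vec (d j)"
    by (rule vsum_carrier) (rule summands)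
  ultimately show ?thesis using comm_add_vec summands by metis
qed

lemma mult_vec_lower_triangular:
  fixes M :: "real mat"
  assumes M: "M \<in> carrier_mat r n" and z: "z \<in> carrier_vec n" and n: "off d N = n" and j: "j < N"
    and tri: "\<And>q. j < q \<Longrightarrow> q < N \<Longrightarrow> cblk d M q = 0\<^sub>m r (d q)"
  shows "M *\<^sub>v z = cblk d M j *\<^sub>v vblk d z j + vsum r (\<lambda>q. cblk d M q *\<^sub>v vblk d z q) j"
proof -
  have summands: "cblk d M q *\<^sub>v vblk d z q \<in> carrier_vec r" for q
    using M by (metis cblk_carrier vblk_carrier mult_mat_vec_carrier carrier_matD(1))
  have "vsum r (\<lambda>q. cblk d M q *\<^sub>v vblk d z q) N
      = vsum r (\<lambda>q. cblk d M q *\<^sub>v vblk d z q) j + cblk d M j *\<^sub>v vblk d z j"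
    by (rule vsum_zero_tail) (use summands tri j in auto)
  then have "M *\<^sub>v z = vsum r (\<lambda>q. cblk d M q *\<^sub>v vblk d z q) j + cblk d M j *\<^sub>v vblk d z j"
    using mult_vec_eq_vsum_cblk[of M r d N z] M z n by simp
  moreover have "vsum r (\<lambda>q. cblk d M q *\<^sub>v vblk d z q) j \<in> carrier_vec r"
    by (rule vsum_carrier) (rule summands)
  ultimately show ?thesis using comm_add_vec summands by metis
qed

lemma vsum_blk_carrier: "vsum (d j) (\<lambda>q. blk d Ab j q *\<^sub>v v q) k \<in> carrier_vec (d j)"
  by (intro vsum_carrier carrier_vecI) (simp add: blk_def subm_def)

lemma stack_index_block:
  assumes c: "c < off d N"
  defines "j \<equiv> LEAST j. c < off d (Suc j)"
  shows "j < N" "off d j \<le> c" "c < off d j + d j"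
proof -
  have "0 < N" using c by (cases N) (auto simp: off_def)
  with c have "c < off d (Suc (N - 1))" by simp
  then have "j \<le> N - 1" "c < off d (Suc j)"
    unfolding j_def by (fast intro: Least_le, fast intro: LeastI)
  then show "j < N" "c < off d j + d j" using \<open>0 < N\<close> by (simp_all add: off_Suc)
  show "off d j \<le> c"
  proof (cases j)
    case (Suc j')
    then have "\<not> c < off d (Suc j')" unfolding j_def by (metis lessI not_less_Least)
    then show ?thesis using Suc by simp
  qed (simp add: off_def)
qed

lemma stack_vblk:
  assumes z: "z \<in> carrier_vec (off d N)" and eq: "\<And>j. j < N \<Longrightarrow> zs j = vblk d z j"
  shows "stack d N zs = z"
proof (rule eq_vecI)
  show "dim_vec (stack d N zs) = dim_vec z" using z by (simp add: stack_def)
  fix c assume "c < dim_vec z"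
  then have c: "c < off d N" using z by simp
  define j where "j = (LEAST j. c < off d (Suc j))"
  have j: "j < N" "off d j \<le> c" "c < off d j + d j" using stack_index_block[OF c] unfolding j_def by auto
  have "stack d N zs $ c = zs j $ (c - off d j)" using c by (simp add: stack_def j_def Let_def)
  also have "\<dots> = z $ c"
  proof -
    have l: "c - off d j < d j" using j by arith
    have e: "off d j + (c - off d j) = c" using j by arith
    show ?thesis using eq[OF j(1)] l e by (simp add: vblk_def)
  qed
  finally show "stack d N zs $ c = z $ c" .
qed

section \<open>Spreading over jointly strongly connected graphs\<close>

lemma rtrancl_exit:
  assumes "(a, b) \<in> R\<^sup>*" "a \<in> X" "b \<notin> X"
  shows "\<exists>x y. (x, y) \<in> R \<and> x \<in> X \<and> y \<notin> X"
  using assms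
proof (induction rule: rtrancl_induct)
  case base then show ?case by simp
next
  case (step y z)
  then show ?case by (cases "y \<in> X") auto
qed

lemma persistent_mono:
  assumes "\<And>k. P k \<Longrightarrow> P (Suc k)" "P k" "k \<le> k'"
  shows "P k'"
  using assms(3,2) by (induction k' rule: dec_induct) (use assms(1) in auto)

lemma strongly_connected_window_spreads:
  fixes good :: "nat \<Rightarrow> nat \<Rightarrow> bool"
  assumes persist: "\<And>k i. i < N \<Longrightarrow> good k i \<Longrightarrow> good (Suc k) i"
    and spreads: "\<And>k i l. i < N \<Longrightarrow> l < N \<Longrightarrow> i \<noteq> j \<Longrightarrow> l \<in> nbrs N E k i \<Longrightarrow> good k l \<Longrightarrow>
      good (Suc k) i"
    and conn: "union_strongly_connected N E k1 k2" and "k1 \<le> k2" and j: "j < N" "good k1 j"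
  shows "min N (Suc (card {i. i < N \<and> good k1 i})) \<le> card {i. i < N \<and> good (Suc k2) i}"
proof -
  define G1 where "G1 = {i. i < N \<and> good k1 i}"
  define G2 where "G2 = {i. i < N \<and> good (Suc k2) i}"
  have later: "good k' i" if "good k i" "k \<le> k'" "i < N" for k k' i
    using persistent_mono[of "\<lambda>k. good k i"] persist that by blast
  have "G1 \<subseteq> G2" using later \<open>k1 \<le> k2\<close> by (auto simp: G1_def G2_def)
  show ?thesis
  proof (cases "G1 = {..<N}")
    case True
    then have "card {..<N} \<le> card G2" using \<open>G1 \<subseteq> G2\<close> by (intro card_mono) (auto simp: G2_def)
    then show ?thesis unfolding G1_def G2_def by simp
  next
    case False
    then obtain b where b: "b < N" "b \<notin> G1" by (auto simp: G1_def)
    have "(j, b) \<in> ((\<Union>\<tau> \<in> {k1..k2}. E \<tau>) \<inter> ({..<N} \<times> {..<N}))\<^sup>*"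
      using conn j b unfolding union_strongly_connected_def by blast
    from rtrancl_exit[OF this, of G1] obtain x y \<tau> where
      xy: "x \<in> G1" "y \<notin> G1" "x < N" "y < N" "\<tau> \<in> {k1..k2}" "(x, y) \<in> E \<tau>"
      using j b by (auto simp: G1_def)
    then have "x \<in> nbrs N E \<tau> y" "y \<noteq> j" "good \<tau> x"
      using j later[of k1 x \<tau>] by (auto simp: nbrs_def G1_def)
    then have "good (Suc k2) y"
      using spreads[of y x \<tau>] later[of "Suc \<tau>" y "Suc k2"] xy by auto
    then have "insert y G1 \<subseteq> G2"
      using \<open>G1 \<subseteq> G2\<close> xy(4) by (auto simp: G2_def)
    then have "card (insert y G1) \<le> card G2" by (intro card_mono) (auto simp: G2_def)
    then show ?thesis using xy(2) by (simp add: G1_def G2_def)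
  qed
qed

lemma persistent_spread:
  fixes good :: "nat \<Rightarrow> nat \<Rightarrow> bool"
  assumes persist: "\<And>k i. i < N \<Longrightarrow> good k i \<Longrightarrow> good (Suc k) i"
    and spreads: "\<And>k i l. i < N \<Longrightarrow> l < N \<Longrightarrow> i \<noteq> j \<Longrightarrow> l \<in> nbrs N E k i \<Longrightarrow> good k l \<Longrightarrow>
      good (Suc k) i"
    and source: "\<And>k. S \<le> k \<Longrightarrow> good k j" and j: "j < N"
    and t: "strict_mono t" and conn: "\<And>q. union_strongly_connected N E (t q) (t (Suc q) - 1)"
  shows "\<forall>k \<ge> t (S + N). \<forall>i < N. good k i"
proof -
  define G where "G q = {i. i < N \<and> good (t q) i}" for q
  have window: "t q \<le> t (Suc q) - 1" "Suc (t (Suc q) - 1) = t (Suc q)" for q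
    using strict_monoD[OF t, of q "Suc q"] by simp_all
  have grows: "min N (Suc (card (G q))) \<le> card (G (Suc q))" if "S \<le> q" for q
  proof -
    have "good (t q) j" using source seq_suble[OF t, of q] that by simp
    from strongly_connected_window_spreads[of N good j E "t q" "t (Suc q) - 1",
        OF persist spreads conn[of q] window(1) j this]
    show ?thesis using window(2) by (simp add: G_def)
  qed
  have "min N (Suc m) \<le> card (G (S + m))" for m
  proof (induction m)
    case 0
    have "j \<in> G S" using source seq_suble[OF t, of S] j unfolding G_def by blast
    then show ?case using card_mono[of "G S" "{j}"] by (fastforce simp: G_def)
  next
    case (Suc m)
    then show ?case using grows[of "S + m"] by simp
  qed
  from this[of N] have "G (S + N) = {..<N}"
    by (intro card_seteq) (auto simp: G_def)
  show ?thesis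
  proof (intro allI impI)
    fix k i assume "t (S + N) \<le> k" "i < N"
    moreover have "good (t (S + N)) i" using \<open>G (S + N) = {..<N}\<close> \<open>i < N\<close> by (auto simp: G_def)
    ultimately show "good k i" using persistent_mono[of "\<lambda>k. good k i"] persist by blast
  qed
qed

section \<open>Runs of the algorithm\<close>

definition relay_step ::
  "nat \<Rightarrow> (nat \<Rightarrow> (nat \<times> nat) set) \<Rightarrow> (nat \<Rightarrow> nat) \<Rightarrow> real mat \<Rightarrow>
   (nat \<Rightarrow> nat \<Rightarrow> nat \<Rightarrow> real vec) \<Rightarrow> (nat \<Rightarrow> nat \<Rightarrow> nat \<Rightarrow> nat option) \<Rightarrow>
   nat \<Rightarrow> nat \<Rightarrow> nat \<Rightarrow> bool" where
  "relay_step N E d Ab zh tau k i j \<longleftrightarrow>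
    (let M = {l \<in> nbrs N E k i. tau k l j \<noteq> None};
         F = (case tau k i j of None \<Rightarrow> M
              | Some ti \<Rightarrow> {l \<in> M. the (tau k l j) < ti});
         own = vsum (d j) (\<lambda>q. blk d Ab j q *\<^sub>v zh k i q) j
     in if F \<noteq> {} then
          (\<exists>u \<in> F. (\<forall>l \<in> F. the (tau k u j) \<le> the (tau k l j)) \<and>
             tau (Suc k) i j = Some (the (tau k u j) + 1) \<and>
             zh (Suc k) i j = blk d Ab j j *\<^sub>v zh k u j + own)
        else
          tau (Suc k) i j = map_option Suc (tau k i j) \<and>
          zh (Suc k) i j = blk d Ab j j *\<^sub>v zh k i j + own)"

lemma algorithm_run_relay_step:
  assumes "algorithm_run N d Ab Cb L E y zh tau" "i < N" "j < N" "i \<noteq> j"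
  shows "relay_step N E d Ab zh tau k i j"
  using assms unfolding algorithm_run_def relay_step_def by blast

context
  fixes N E d Ab zh tau k i j
  assumes step: "relay_step N E d Ab zh tau k i j"
begin

abbreviation (input) "own \<equiv> vsum (d j) (\<lambda>q. blk d Ab j q *\<^sub>v zh k i q) j"

lemma relay_step_cases:
  obtains (adopt) u su where "u \<in> nbrs N E k i" "tau k u j = Some su"
      "\<And>l sl. l \<in> nbrs N E k i \<Longrightarrow> tau k l j = Some sl \<Longrightarrow> su \<le> sl"
      "\<And>si. tau k i j = Some si \<Longrightarrow> su < si"
      "tau (Suc k) i j = Some (su + 1)" "zh (Suc k) i j = blk d Ab j j *\<^sub>v zh k u j + own"
  | (keep) "\<And>l sl. l \<in> nbrs N E k i \<Longrightarrow> tau k l j = Some sl \<Longrightarrow> \<exists>si. tau k i j = Some si \<and> si \<le> sl"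
      "tau (Suc k) i j = map_option Suc (tau k i j)" "zh (Suc k) i j = blk d Ab j j *\<^sub>v zh k i j + own"
proof -
  define M where "M = {l \<in> nbrs N E k i. tau k l j \<noteq> None}"
  define F where "F = (case tau k i j of None \<Rightarrow> M | Some ti \<Rightarrow> {l \<in> M. the (tau k l j) < ti})"
  have rule: "if F \<noteq> {} then
        (\<exists>u \<in> F. (\<forall>l \<in> F. the (tau k u j) \<le> the (tau k l j)) \<and>
           tau (Suc k) i j = Some (the (tau k u j) + 1) \<and>
           zh (Suc k) i j = blk d Ab j j *\<^sub>v zh k u j + own)
      else
        tau (Suc k) i j = map_option Suc (tau k i j) \<and>
        zh (Suc k) i j = blk d Ab j j *\<^sub>v zh k i j + own"
    using step unfolding relay_step_def M_def F_def by (simp only: Let_def)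
  have F_iff: "l \<in> F \<longleftrightarrow> l \<in> nbrs N E k i \<and> (\<exists>sl. tau k l j = Some sl \<and>
      (\<forall>si. tau k i j = Some si \<longrightarrow> sl < si))" for l
    by (cases "tau k i j") (auto simp: F_def M_def)
  show ?thesis
  proof (cases "F = {}")
    case False
    with rule obtain u where u: "u \<in> F" "\<forall>l \<in> F. the (tau k u j) \<le> the (tau k l j)"
      "tau (Suc k) i j = Some (the (tau k u j) + 1)" "zh (Suc k) i j = blk d Ab j j *\<^sub>v zh k u j + own"
      by auto
    then obtain su where su: "u \<in> nbrs N E k i" "tau k u j = Some su"
      "\<And>si. tau k i j = Some si \<Longrightarrow> su < si"
      using F_iff by auto
    have "su \<le> sl" if "l \<in> nbrs N E k i" "tau k l j = Some sl" for l sl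
      using u(2) F_iff[of l] su that by (cases "l \<in> F") (force, auto)
    then show ?thesis using adopt su u by simp
  next
    case True
    then have "\<exists>si. tau k i j = Some si \<and> si \<le> sl"
      if "l \<in> nbrs N E k i" "tau k l j = Some sl" for l sl
      using F_iff[of l] that by (cases "tau k i j") auto
    then show ?thesis using keep rule True by simp
  qed
qed

lemma relay_step_fresh:
  assumes "u = i \<or> u \<in> nbrs N E k i" "tau k u j = Some s"
  shows "\<exists>s'. tau (Suc k) i j = Some s' \<and> s' \<le> s + 1"
  using assms by (cases rule: relay_step_cases) force+

lemma relay_step_source:
  assumes "tau (Suc k) i j = Some s"
  shows "\<exists>u su. (u = i \<or> u \<in> nbrs N E k i) \<and> tau k u j = Some su \<and> s = su + 1 \<and>
           zh (Suc k) i j = blk d Ab j j *\<^sub>v zh k u j + own"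
  using assms by (cases rule: relay_step_cases) auto

lemma relay_step_shape: "\<exists>w. zh (Suc k) i j = blk d Ab j j *\<^sub>v w + own"
  by (cases rule: relay_step_cases) auto

end

lemma luenberger_error_identity:
  fixes A C L :: "real mat"
  assumes A: "A \<in> carrier_mat m m" and C: "C \<in> carrier_mat p m" and L: "L \<in> carrier_mat m p"
    and zh: "zh \<in> carrier_vec m" and z: "z \<in> carrier_vec m"
    and a: "a \<in> carrier_vec m" and b: "b \<in> carrier_vec p"
  shows "(A - L * C) *\<^sub>v zh + (a - L *\<^sub>v b) + L *\<^sub>v (C *\<^sub>v z + b) - (A *\<^sub>v z + a)
    = (A - L * C) *\<^sub>v (zh - z)"
proof -
  have LC: "L * C \<in> carrier_mat m m" using L C by simp
  have vector_identity: "p1 - p2 + (a - p3) + (p4 + p3) - (p5 + a) = (p1 - p5) - (p2 - p4)"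
    if "p1 \<in> carrier_vec m" "p2 \<in> carrier_vec m" "p3 \<in> carrier_vec m" "p4 \<in> carrier_vec m"
      "p5 \<in> carrier_vec m" for p1 p2 p3 p4 p5
    using that a by (intro eq_vecI) auto
  have "L *\<^sub>v (C *\<^sub>v z + b) = (L * C) *\<^sub>v z + L *\<^sub>v b"
    using L C b z by (simp add: mult_add_distrib_mat_vec[of _ m p] assoc_mult_mat_vec[of _ m p _ m])
  moreover have "(A - L * C) *\<^sub>v zh = A *\<^sub>v zh - (L * C) *\<^sub>v zh"
    by (rule minus_mult_distrib_mat_vec[OF A LC zh])
  ultimately have "(A - L * C) *\<^sub>v zh + (a - L *\<^sub>v b) + L *\<^sub>v (C *\<^sub>v z + b) - (A *\<^sub>v z + a)
      = (A *\<^sub>v zh - (L * C) *\<^sub>v zh) + (a - L *\<^sub>v b) + ((L * C) *\<^sub>v z + L *\<^sub>v b) - (A *\<^sub>v z + a)"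
    by (simp only:)
  also have "\<dots> = (A *\<^sub>v zh - A *\<^sub>v z) - ((L * C) *\<^sub>v zh - (L * C) *\<^sub>v z)"
    by (rule vector_identity) (use A LC L zh z b in auto)
  also have "\<dots> = (A - L * C) *\<^sub>v (zh - z)"
    using A LC zh z by (simp add: mult_minus_distrib_mat_vec[of _ m m] minus_mult_distrib_mat_vec[of _ m m])
  finally show ?thesis .
qed

text \<open>
  After \<open>settling_time t d N j\<close> every node knows the sub-states below \<open>j\<close> exactly: \<open>d j\<close> further
  steps make the source of sub-state \<open>j\<close> exact, and \<open>N\<close> further windows spread this to all nodes.
\<close>

primrec settling_time :: "(nat \<Rightarrow> nat) \<Rightarrow> (nat \<Rightarrow> nat) \<Rightarrow> nat \<Rightarrow> nat \<Rightarrow> nat" where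
  "settling_time t d N 0 = 0"
| "settling_time t d N (Suc j) = t (settling_time t d N j + d j + N)"

text \<open>\<open>zs k j\<close> is the true sub-state \<open>z\<^sup>(\<^sup>j\<^sup>)[k]\<close>, through which the measurements \<open>y\<close> are expressed.\<close>

locale observer_run =
  fixes N :: nat and d :: "nat \<Rightarrow> nat" and Ab :: "real mat" and Cb L :: "nat \<Rightarrow> real mat"
    and E :: "nat \<Rightarrow> (nat \<times> nat) set" and t :: "nat \<Rightarrow> nat"
    and y zs :: "nat \<Rightarrow> nat \<Rightarrow> real vec"
    and zh :: "nat \<Rightarrow> nat \<Rightarrow> nat \<Rightarrow> real vec" and tau :: "nat \<Rightarrow> nat \<Rightarrow> nat \<Rightarrow> nat option"
  assumes run: "algorithm_run N d Ab Cb L E y zh tau"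
    and zs_carrier: "\<And>k j. zs k j \<in> carrier_vec (d j)"
    and zs_step: "\<And>k j. j < N \<Longrightarrow>
      zs (Suc k) j = blk d Ab j j *\<^sub>v zs k j + vsum (d j) (\<lambda>q. blk d Ab j q *\<^sub>v zs k q) j"
    and y_blocks: "\<And>k j. j < N \<Longrightarrow>
      y j k = cblk d (Cb j) j *\<^sub>v zs k j + vsum (dim_row (Cb j)) (\<lambda>q. cblk d (Cb j) q *\<^sub>v zs k q) j"
    and gain: "\<And>j. j < N \<Longrightarrow> L j \<in> carrier_mat (d j) (dim_row (Cb j))"
    and deadbeat: "\<And>j. j < N \<Longrightarrow> (blk d Ab j j - L j * cblk d (Cb j) j) ^\<^sub>m d j = 0\<^sub>m (d j) (d j)"
    and t_mono: "strict_mono t"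
    and connected: "\<And>q. union_strongly_connected N E (t q) (t (Suc q) - 1)"
begin

lemma initial_carrier: "i < N \<Longrightarrow> j < N \<Longrightarrow> zh 0 i j \<in> carrier_vec (d j)"
  using conjunct1[OF run[unfolded algorithm_run_def]] by blast

lemma initial_fresh: "i < N \<Longrightarrow> j < N \<Longrightarrow> tau 0 i j = Some s \<Longrightarrow> i = j"
  using conjunct1[OF conjunct2[OF run[unfolded algorithm_run_def]]]
  by (metis option.distinct(1))

lemma source_fresh: "j < N \<Longrightarrow> tau k j j = Some 0"
  and source_update: "j < N \<Longrightarrow> zh (Suc k) j j =
     (blk d Ab j j - L j * cblk d (Cb j) j) *\<^sub>v zh k j j
     + vsum (d j) (\<lambda>q. (blk d Ab j q - L j * cblk d (Cb j) q) *\<^sub>v zh k j q) j + L j *\<^sub>v y j k"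
  using conjunct1[OF conjunct2[OF conjunct2[OF run[unfolded algorithm_run_def]]]] by blast+

lemma run_relay_step: "i < N \<Longrightarrow> j < N \<Longrightarrow> i \<noteq> j \<Longrightarrow> relay_step N E d Ab zh tau k i j"
  using algorithm_run_relay_step[OF run] .

lemma zh_carrier: "i < N \<Longrightarrow> j < N \<Longrightarrow> zh k i j \<in> carrier_vec (d j)"
proof (induction k)
  case 0
  then show ?case by (rule initial_carrier)
next
  case (Suc k)
  show ?case
  proof (cases "i = j")
    case True
    have "dim_vec (zh (Suc k) j j) = dim_vec (L j *\<^sub>v y j k)"
      unfolding source_update[OF Suc.prems(2)] by (rule index_add_vec(2))
    also have "\<dots> = d j" using gain[OF Suc.prems(2)] by (simp add: carrier_matD(1))
    finally show ?thesis unfolding True by (rule carrier_vecI)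
  next
    case False
    then obtain w where "zh (Suc k) i j = blk d Ab j j *\<^sub>v w + vsum (d j) (\<lambda>q. blk d Ab j q *\<^sub>v zh k i q) j"
      using relay_step_shape[OF run_relay_step[OF Suc.prems False]] by blast
    then have "dim_vec (zh (Suc k) i j) = dim_vec (vsum (d j) (\<lambda>q. blk d Ab j q *\<^sub>v zh k i q) j)"
      by (simp only: index_add_vec(2))
    also have "\<dots> = d j" by (rule carrier_vecD[OF vsum_blk_carrier])
    finally show ?thesis by (rule carrier_vecI)
  qed
qed

lemma source_error_step:
  assumes j: "j < N" and lower: "\<And>q. q < j \<Longrightarrow> zh k j q = zs k q"
  shows "zh (Suc k) j j - zs (Suc k) j = (blk d Ab j j - L j * cblk d (Cb j) j) *\<^sub>v (zh k j j - zs k j)"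
proof -
  define p where "p = dim_row (Cb j)"
  define A where "A q = blk d Ab j q" for q
  define C where "C q = cblk d (Cb j) q" for q
  have A: "A q \<in> carrier_mat (d j) (d q)" for q by (simp add: A_def)
  have C: "C q \<in> carrier_mat p (d q)" for q by (simp add: C_def p_def)
  have Lj: "L j \<in> carrier_mat (d j) p" using gain[OF j] by (simp add: p_def)
  define a where "a = vsum (d j) (\<lambda>q. A q *\<^sub>v zs k q) j"
  define b where "b = vsum p (\<lambda>q. C q *\<^sub>v zs k q) j"
  have a: "a \<in> carrier_vec (d j)" unfolding a_def
    by (rule vsum_carrier, rule mult_mat_vec_carrier[OF A zs_carrier])
  have b: "b \<in> carrier_vec p" unfolding b_def
    by (rule vsum_carrier, rule mult_mat_vec_carrier[OF C zs_carrier])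
  have "vsum (d j) (\<lambda>q. (A q - L j * C q) *\<^sub>v zh k j q) j
      = vsum (d j) (\<lambda>q. A q *\<^sub>v zs k q - L j *\<^sub>v (C q *\<^sub>v zs k q)) j"
  proof (rule vsum_cong)
    fix q assume "q < j"
    have LC: "L j * C q \<in> carrier_mat (d j) (d q)" using Lj C by simp
    have "(A q - L j * C q) *\<^sub>v zs k q = A q *\<^sub>v zs k q - (L j * C q) *\<^sub>v zs k q"
      by (rule minus_mult_distrib_mat_vec[OF A LC zs_carrier])
    also have "(L j * C q) *\<^sub>v zs k q = L j *\<^sub>v (C q *\<^sub>v zs k q)"
      by (rule assoc_mult_mat_vec[OF Lj C zs_carrier])
    finally show "(A q - L j * C q) *\<^sub>v zh k j q = A q *\<^sub>v zs k q - L j *\<^sub>v (C q *\<^sub>v zs k q)"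
      using lower \<open>q < j\<close> by simp
  qed
  also have "\<dots> = a - vsum (d j) (\<lambda>q. L j *\<^sub>v (C q *\<^sub>v zs k q)) j"
    unfolding a_def
    by (rule vsum_minus) (use A C Lj zs_carrier in \<open>metis mult_mat_vec_carrier\<close>)+
  also have "vsum (d j) (\<lambda>q. L j *\<^sub>v (C q *\<^sub>v zs k q)) j = L j *\<^sub>v b"
    unfolding b_def
    by (rule mult_mat_vsum[OF Lj, symmetric]) (rule mult_mat_vec_carrier[OF C zs_carrier])
  finally have "zh (Suc k) j j = (A j - L j * C j) *\<^sub>v zh k j j + (a - L j *\<^sub>v b) + L j *\<^sub>v (C j *\<^sub>v zs k j + b)"
    using source_update[OF j, of k] y_blocks[OF j, of k] by (simp add: A_def C_def b_def p_def)
  moreover have "zs (Suc k) j = A j *\<^sub>v zs k j + a"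
    using zs_step[OF j, of k] by (simp add: a_def A_def)
  ultimately show ?thesis
    using luenberger_error_identity[OF A C Lj zh_carrier[OF j j] zs_carrier a b]
    by (simp add: A_def C_def)
qed

lemma source_exact:
  assumes j: "j < N" and lower: "\<And>k q. K0 \<le> k \<Longrightarrow> q < j \<Longrightarrow> zh k j q = zs k q"
    and k: "K0 + d j \<le> k"
  shows "zh k j j = zs k j"
proof -
  define G where "G = blk d Ab j j - L j * cblk d (Cb j) j"
  have G: "G \<in> carrier_mat (d j) (d j)"
    unfolding G_def by (rule minus_carrier_mat, rule mult_carrier_mat[OF gain[OF j] cblk_carrier])
  define e where "e k = zh k j j - zs k j" for k
  have e: "e k \<in> carrier_vec (d j)" for k
    unfolding e_def using zh_carrier[OF j j] zs_carrier by (rule minus_carrier_vec)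
  have e_step: "e (Suc k) = G *\<^sub>v e k" if "K0 \<le> k" for k
    unfolding e_def G_def by (rule source_error_step[OF j lower[OF that]])
  have "e (K0 + s) = (G ^\<^sub>m s) *\<^sub>v e K0" for s
  proof (induction s)
    case 0
    have "dim_row G = d j" using G by (rule carrier_matD(1))
    then show ?case using one_mult_mat_vec[OF e[of K0]] by simp
  next
    case (Suc s)
    have "e (K0 + Suc s) = G *\<^sub>v ((G ^\<^sub>m s) *\<^sub>v e K0)"
      using e_step[of "K0 + s"] Suc.IH by simp
    also have "\<dots> = (G ^\<^sub>m Suc s) *\<^sub>v e K0"
      using assoc_mult_mat_vec[OF G pow_carrier_mat[OF G] e] pow_mat_Suc_left[OF G] by simp
    finally show ?case .
  qed
  from this[of "d j"] have zero: "e (K0 + d j) = 0\<^sub>v (d j)"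
    using deadbeat[OF j] zero_mult_mat_vec[OF e[of K0]] unfolding G_def by simp
  from k zero have "e k = 0\<^sub>v (d j)"
  proof (induction k rule: dec_induct)
    case (step k')
    then show ?case using e_step[of k'] mult_mat_vec_zero[OF G] by simp
  qed
  then show ?thesis using zh_carrier[OF j j] zs_carrier unfolding e_def
    by (rule minus_vec_eq_0_imp_eq)
qed

lemma fresh_estimate_exact:
  assumes j: "j < N"
    and source: "\<And>k. S \<le> k \<Longrightarrow> zh k j j = zs k j"
    and lower: "\<And>k i q. S \<le> k \<Longrightarrow> i < N \<Longrightarrow> q < j \<Longrightarrow> zh k i q = zs k q"
  shows "i < N \<Longrightarrow> tau k i j = Some s \<Longrightarrow> s + S \<le> k \<Longrightarrow> zh k i j = zs k j"
proof (induction k arbitrary: i s)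
  case 0
  then show ?case using initial_fresh[OF _ j] source by auto
next
  case (Suc k)
  show ?case
  proof (cases "i = j")
    case True
    then show ?thesis using source Suc.prems by auto
  next
    case False
    from relay_step_source[OF run_relay_step[OF Suc.prems(1) j False] Suc.prems(2)]
    obtain u su where u: "u = i \<or> u \<in> nbrs N E k i" "tau k u j = Some su" "s = su + 1"
      and zh_next: "zh (Suc k) i j = blk d Ab j j *\<^sub>v zh k u j + vsum (d j) (\<lambda>q. blk d Ab j q *\<^sub>v zh k i q) j"
      by blast
    have "u < N" using u(1) Suc.prems(1) by (auto simp: nbrs_def)
    then have "zh k u j = zs k j" using Suc.IH u Suc.prems(3) by simp
    moreover have "vsum (d j) (\<lambda>q. blk d Ab j q *\<^sub>v zh k i q) j = vsum (d j) (\<lambda>q. blk d Ab j q *\<^sub>v zs k q) j"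
      using lower Suc.prems u(3) by (intro vsum_cong) simp
    ultimately show ?thesis using zh_next zs_step[OF j] by simp
  qed
qed

lemma eventually_fresh:
  assumes j: "j < N" and k: "t (S + N) \<le> k" and i: "i < N"
  shows "\<exists>s. tau k i j = Some s \<and> s + S \<le> k"
proof -
  define fresh where "fresh k i \<longleftrightarrow> (\<exists>s. tau k i j = Some s \<and> s + S \<le> k)" for k i
  have "\<forall>k \<ge> t (S + N). \<forall>i < N. fresh k i"
  proof (rule persistent_spread[OF _ _ _ j t_mono connected])
    show "fresh (Suc k) i" if "i < N" "fresh k i" for k i
    proof (cases "i = j")
      case False
      with that show ?thesis
        using relay_step_fresh[OF run_relay_step[OF that(1) j False]] unfolding fresh_def by force
    qed (use source_fresh[OF j] that in \<open>auto simp: fresh_def\<close>)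
    show "fresh (Suc k) i"
      if "i < N" "l < N" "i \<noteq> j" "l \<in> nbrs N E k i" "fresh k l" for k i l
      using that relay_step_fresh[OF run_relay_step[OF that(1) j that(3)]] unfolding fresh_def by force
    show "fresh k j" if "S \<le> k" for k
      using that source_fresh[OF j] by (simp add: fresh_def)
  qed
  then show ?thesis using k i by (simp add: fresh_def)
qed

lemma exact_after_settling:
  "j \<le> N \<Longrightarrow> settling_time t d N j \<le> k \<Longrightarrow> i < N \<Longrightarrow> q < j \<Longrightarrow> zh k i q = zs k q"
proof (induction j arbitrary: k i q)
  case 0
  then show ?case by simp
next
  case (Suc j)
  define S where "S = settling_time t d N j + d j"
  have j: "j < N" using Suc.prems(1) by simp
  have settled: "settling_time t d N j \<le> k" if "S \<le> k" for k
    using that by (simp add: S_def)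
  have lower: "zh k i q = zs k q" if "S \<le> k" "i < N" "q < j" for k i q
    using Suc.IH[OF _ settled] that j by simp
  have source: "zh k j j = zs k j" if "S \<le> k" for k
    using source_exact[OF j, of "settling_time t d N j"] Suc.IH j that by (simp add: S_def)
  have "S + N \<le> t (S + N)" by (rule seq_suble[OF t_mono])
  then have "S \<le> settling_time t d N (Suc j)" by (simp add: S_def)
  show ?case
  proof (cases "q = j")
    case True
    obtain s where "tau k i j = Some s" "s + S \<le> k"
      using eventually_fresh[OF j _ Suc.prems(3), of S] Suc.prems(2) by (auto simp: S_def)
    then show ?thesis using fresh_estimate_exact[OF j source lower Suc.prems(3)] True by blast
  next
    case False
    then show ?thesis using lower Suc.prems \<open>S \<le> settling_time t d N (Suc j)\<close> by simp
  qed
qed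

end

lemma similar_trajectory_step:
  fixes A T Ti :: "real mat"
  assumes A: "A \<in> carrier_mat n n" and T: "T \<in> carrier_mat n n" and Ti: "Ti \<in> carrier_mat n n"
    and T_Ti: "T * Ti = 1\<^sub>m n" and x0: "x0 \<in> carrier_vec n"
  shows "Ti *\<^sub>v ((A ^\<^sub>m Suc k) *\<^sub>v x0) = (Ti * A * T) *\<^sub>v (Ti *\<^sub>v ((A ^\<^sub>m k) *\<^sub>v x0))"
proof -
  have x: "(A ^\<^sub>m k) *\<^sub>v x0 \<in> carrier_vec n" using A x0 by (metis pow_carrier_mat mult_mat_vec_carrier)
  have "(Ti * A * T) *\<^sub>v (Ti *\<^sub>v ((A ^\<^sub>m k) *\<^sub>v x0)) = (Ti * A) *\<^sub>v (T *\<^sub>v (Ti *\<^sub>v ((A ^\<^sub>m k) *\<^sub>v x0)))"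
    using Ti A T x by (intro assoc_mult_mat_vec) auto
  also have "\<dots> = Ti *\<^sub>v (A *\<^sub>v ((A ^\<^sub>m k) *\<^sub>v x0))"
    unfolding mult_mat_vec_right_inverse[OF T Ti T_Ti x] by (rule assoc_mult_mat_vec[OF Ti A x])
  also have "A *\<^sub>v ((A ^\<^sub>m k) *\<^sub>v x0) = (A ^\<^sub>m Suc k) *\<^sub>v x0"
    unfolding pow_mat_Suc_left[OF A] by (rule assoc_mult_mat_vec[OF A pow_carrier_mat[OF A] x0, symmetric])
  finally show ?thesis by simp
qed

lemma exists_deadbeat_gains:
  assumes "\<And>j. j < N \<Longrightarrow> dim_row (Cb j) = r j"
    and "\<And>j. j < N \<Longrightarrow> observable (blk d Ab j j) (cblk d (Cb j) j)"
  shows "\<exists>L. \<forall>j < N. L j \<in> carrier_mat (d j) (r j) \<and>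
    (blk d Ab j j - L j * cblk d (Cb j) j) ^\<^sub>m d j = 0\<^sub>m (d j) (d j)"
proof -
  have "\<exists>Lj \<in> carrier_mat (d j) (r j). (blk d Ab j j - Lj * cblk d (Cb j) j) ^\<^sub>m d j = 0\<^sub>m (d j) (d j)"
    if "j < N" for j
    using observable_imp_deadbeat_gain[OF blk_carrier _ assms(2)[OF that]] cblk_carrier[of d "Cb j" j]
      assms(1)[OF that] by simp
  then show ?thesis by metis
qed

lemma observer_run_of_transformed_system:
  fixes A T Ti :: "real mat" and C L :: "nat \<Rightarrow> real mat"
  assumes A: "A \<in> carrier_mat n n" and C: "\<And>i. i < N \<Longrightarrow> C i \<in> carrier_mat (r i) n"
    and T: "T \<in> carrier_mat n n" and Ti: "Ti \<in> carrier_mat n n" and T_Ti: "T * Ti = 1\<^sub>m n"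
    and n: "off d N = n"
    and lower_tri: "\<And>j q. j < q \<Longrightarrow> q < N \<Longrightarrow> blk d (Ti * A * T) j q = 0\<^sub>m (d j) (d q)"
    and C_struct: "\<And>i q. i < q \<Longrightarrow> q < N \<Longrightarrow> cblk d (C i * T) q = 0\<^sub>m (r i) (d q)"
    and gain: "\<And>j. j < N \<Longrightarrow> L j \<in> carrier_mat (d j) (r j)"
    and deadbeat: "\<And>j. j < N \<Longrightarrow>
      (blk d (Ti * A * T) j j - L j * cblk d (C j * T) j) ^\<^sub>m d j = 0\<^sub>m (d j) (d j)"
    and graph: "graph_conditions N E t"
    and x0: "x0 \<in> carrier_vec n"
    and run: "algorithm_run N d (Ti * A * T) (\<lambda>i. C i * T) L E
      (\<lambda>j k. C j *\<^sub>v ((A ^\<^sub>m k) *\<^sub>v x0)) zh tau"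
  shows "observer_run N d (Ti * A * T) (\<lambda>i. C i * T) L E t (\<lambda>j k. C j *\<^sub>v ((A ^\<^sub>m k) *\<^sub>v x0))
     (\<lambda>k. vblk d (Ti *\<^sub>v ((A ^\<^sub>m k) *\<^sub>v x0))) zh tau"
proof -
  define z where "z k = Ti *\<^sub>v ((A ^\<^sub>m k) *\<^sub>v x0)" for k
  have x: "(A ^\<^sub>m k) *\<^sub>v x0 \<in> carrier_vec n" for k using A x0 by (metis pow_carrier_mat mult_mat_vec_carrier)
  have z: "z k \<in> carrier_vec n" for k unfolding z_def using Ti x by (rule mult_mat_vec_carrier)
  have T_z: "T *\<^sub>v z k = (A ^\<^sub>m k) *\<^sub>v x0" for k
    unfolding z_def by (rule mult_mat_vec_right_inverse[OF T Ti T_Ti x])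
  have z_step: "z (Suc k) = (Ti * A * T) *\<^sub>v z k" for k
    unfolding z_def by (rule similar_trajectory_step[OF A T Ti T_Ti x0])
  have y: "C j *\<^sub>v ((A ^\<^sub>m k) *\<^sub>v x0) = (C j * T) *\<^sub>v z k" if "j < N" for j k
    unfolding T_z[symmetric] by (rule assoc_mult_mat_vec[OF C[OF that] T z, symmetric])
  have Ab: "Ti * A * T \<in> carrier_mat n n" using Ti A T by simp
  have rows: "dim_row (C j * T) = r j" if "j < N" for j using C[OF that] by simp
  show ?thesis
  proof (unfold_locales)
    show "algorithm_run N d (Ti * A * T) (\<lambda>i. C i * T) L E (\<lambda>j k. C j *\<^sub>v ((A ^\<^sub>m k) *\<^sub>v x0)) zh tau"
      by (rule run)
    show "vblk d (Ti *\<^sub>v ((A ^\<^sub>m k) *\<^sub>v x0)) j \<in> carrier_vec (d j)" for k j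
      by (rule vblk_carrier)
    show "vblk d (Ti *\<^sub>v ((A ^\<^sub>m Suc k) *\<^sub>v x0)) j = blk d (Ti * A * T) j j *\<^sub>v vblk d (Ti *\<^sub>v ((A ^\<^sub>m k) *\<^sub>v x0)) j
        + vsum (d j) (\<lambda>q. blk d (Ti * A * T) j q *\<^sub>v vblk d (Ti *\<^sub>v ((A ^\<^sub>m k) *\<^sub>v x0)) q) j"
      if "j < N" for k j
      using vblk_mult_vec_lower_triangular[OF Ab z n that lower_tri] z_step
      unfolding z_def by simp
    show "C j *\<^sub>v ((A ^\<^sub>m k) *\<^sub>v x0) = cblk d (C j * T) j *\<^sub>v vblk d (Ti *\<^sub>v ((A ^\<^sub>m k) *\<^sub>v x0)) j
        + vsum (dim_row (C j * T)) (\<lambda>q. cblk d (C j * T) q *\<^sub>v vblk d (Ti *\<^sub>v ((A ^\<^sub>m k) *\<^sub>v x0)) q) j"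
      if "j < N" for k j
      using mult_vec_lower_triangular[OF mult_carrier_mat[OF C[OF that] T] z n that C_struct]
        y[OF that] rows[OF that] unfolding z_def by simp
    show "L j \<in> carrier_mat (d j) (dim_row (C j * T))" if "j < N" for j
      using gain[OF that] rows[OF that] by simp
    show "(blk d (Ti * A * T) j j - L j * cblk d (C j * T) j) ^\<^sub>m d j = 0\<^sub>m (d j) (d j)" if "j < N" for j
      by (rule deadbeat[OF that])
    show "strict_mono t" using graph by (simp add: graph_conditions_def)
    show "union_strongly_connected N E (t q) (t (Suc q) - 1)" for q
      using graph by (simp add: graph_conditions_def)
  qed
qed

theorem proposition1:
  fixes N n :: nat
    and A T Ti :: "real mat"
    and C :: "nat \<Rightarrow> real mat"
    and r d :: "nat \<Rightarrow> nat"
    and E :: "nat \<Rightarrow> (nat \<times> nat) set"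
    and t :: "nat \<Rightarrow> nat"
  assumes A_dim: "A \<in> carrier_mat n n"
    and C_dim: "\<forall>i < N. C i \<in> carrier_mat (r i) n"
    and obs: "observable_stacked N A C"
    and T_dim: "T \<in> carrier_mat n n" and Ti_dim: "Ti \<in> carrier_mat n n"
    and T_inv: "Ti * T = 1\<^sub>m n" "T * Ti = 1\<^sub>m n"
    and d_sum: "off d N = n"
    and lower_tri: "\<forall>j < N. \<forall>q < N. j < q \<longrightarrow> blk d (Ti * A * T) j q = 0\<^sub>m (d j) (d q)"
    and C_struct: "\<forall>i < N. \<forall>q < N. i < q \<longrightarrow> cblk d (C i * T) q = 0\<^sub>m (r i) (d q)"
    and blk_obs: "\<forall>j < N. observable (blk d (Ti * A * T) j j) (cblk d (C j * T) j)"
    and graph: "graph_conditions N E t"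
  shows "\<exists>L. (\<forall>j < N. L j \<in> carrier_mat (d j) (r j)) \<and>
           (\<exists>K. \<forall>x0 \<in> carrier_vec n. \<forall>zh tau.
              algorithm_run N d (Ti * A * T) (\<lambda>i. C i * T) L E
                 (\<lambda>j k. C j *\<^sub>v ((A ^\<^sub>m k) *\<^sub>v x0)) zh tau \<longrightarrow>
              (\<forall>k \<ge> K. \<forall>i < N. T *\<^sub>v stack d N (zh k i) = (A ^\<^sub>m k) *\<^sub>v x0))"
proof -
  have "\<exists>L. \<forall>j < N. L j \<in> carrier_mat (d j) (r j) \<and>
      (blk d (Ti * A * T) j j - L j * cblk d (C j * T) j) ^\<^sub>m d j = 0\<^sub>m (d j) (d j)"
    by (rule exists_deadbeat_gains) (use C_dim blk_obs in auto)
  then obtain L where L: "\<And>j. j < N \<Longrightarrow> L j \<in> carrier_mat (d j) (r j)"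
    "\<And>j. j < N \<Longrightarrow> (blk d (Ti * A * T) j j - L j * cblk d (C j * T) j) ^\<^sub>m d j = 0\<^sub>m (d j) (d j)"
    by blast
  show ?thesis
  proof (intro exI[of _ L] exI[of _ "settling_time t d N N"] conjI ballI allI impI)
    show "L j \<in> carrier_mat (d j) (r j)" if "j < N" for j using L(1) that .
    fix x0 zh tau k i
    assume x0: "x0 \<in> carrier_vec n"
      and run: "algorithm_run N d (Ti * A * T) (\<lambda>i. C i * T) L E (\<lambda>j k. C j *\<^sub>v ((A ^\<^sub>m k) *\<^sub>v x0)) zh tau"
      and k: "settling_time t d N N \<le> k" and i: "i < N"
    interpret observer_run N d "Ti * A * T" "\<lambda>i. C i * T" L E t "\<lambda>j k. C j *\<^sub>v ((A ^\<^sub>m k) *\<^sub>v x0)"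
      "\<lambda>k. vblk d (Ti *\<^sub>v ((A ^\<^sub>m k) *\<^sub>v x0))" zh tau
      by (rule observer_run_of_transformed_system[OF A_dim _ T_dim Ti_dim T_inv(2) d_sum _ _ L graph x0 run])
        (use C_dim lower_tri C_struct in simp_all)
    have x: "(A ^\<^sub>m k) *\<^sub>v x0 \<in> carrier_vec n"
      using A_dim x0 by (metis pow_carrier_mat mult_mat_vec_carrier)
    have "stack d N (zh k i) = Ti *\<^sub>v ((A ^\<^sub>m k) *\<^sub>v x0)"
      by (rule stack_vblk) (use x Ti_dim d_sum exact_after_settling[OF order.refl k i] in auto)
    then show "T *\<^sub>v stack d N (zh k i) = (A ^\<^sub>m k) *\<^sub>v x0"
      using mult_mat_vec_right_inverse[OF T_dim Ti_dim T_inv(2) x] by simp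
  qed
qed

end
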